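(* Let $q=p^e$ with $p$ an odd prime and $e\ge1$, let $m\ge3$ be odd, $D=\{x\in\mathbb{F}_{q^m}:\mathrm{Tr}_{q^m/q}(x^2)=0\}=\{d_1,\dots,d_n\}$ (so $n=q^{m-1}$), and let $\alpha$ be a generator of $\mathbb{F}_{q^m}^*$. Let $G_2$ be the $(m+1)\times n$ matrix whose first row is $(1,\dots,1)$, second row $(\mathrm{Tr}_{q^m/q}(d_j))_j$, third row $(\mathrm{Tr}_{q^m/q}(\alpha d_j)+1)_j$, and $(i+2)$-th row $(\mathrm{Tr}_{q^m/q}(\alpha^id_j))_j$ for $2\le i\le m-1$. Let $G_2'=[I_{m+1}:G_2]$ and let $\overline{\mathcal{C}_D}'$ be the code generated by $G_2'$. Then $\overline{\mathcal{C}_D}'$ has parameters $[q^{m-1}+m+1,\ m+1,\ d']$ with $d'\ge (q-1)q^{\frac{m-3}{2}}(q^{\frac{m-1}{2}}-1)+1$, and $\overline{\mathcal{C}_D}'^{\perp}$ has parameters $[q^{m-1}+m+1,\ q^{m-1},\ d'^{\perp}]$ with $2\le d'^{\perp}\le3$.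
   Context: $\mathrm{Tr}_{q^m/q}$ is the trace map; $I_{m+1}$ is the identity matrix of size $m+1$. $G_2$ is a generator matrix of $\{(\mathrm{Tr}_{q^m/q}(bx)+c)_{x\in D}:b\in\mathbb{F}_{q^m},c\in\mathbb{F}_q\}$. *)

theory Defs
  imports Main "HOL-Computational_Algebra.Primes"
begin

text \<open>The finite field F_{q^m} is modelled by a finite field type 'a with CARD('a) = q^m;
  the subfield F_q is the set of elements fixed by x \<mapsto> x^q.\<close>

definition subfield_Fq :: "nat \<Rightarrow> 'a::field set" where
  "subfield_Fq q = {x. x ^ q = x}"

definition trace :: "nat \<Rightarrow> nat \<Rightarrow> 'a::field \<Rightarrow> 'a" where
  "trace q m x = (\<Sum>i<m. x ^ (q ^ i))"

definition words :: "nat \<Rightarrow> nat \<Rightarrow> (nat \<Rightarrow> 'a::field) set" where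
  "words q N = {v. (\<forall>i<N. v i \<in> subfield_Fq q) \<and> (\<forall>i\<ge>N. v i = 0)}"

definition gen_code :: "nat \<Rightarrow> nat \<Rightarrow> nat \<Rightarrow> (nat \<Rightarrow> nat \<Rightarrow> 'a::field) \<Rightarrow> (nat \<Rightarrow> 'a) set" where
  "gen_code q k N G = {(\<lambda>c. if c < N then (\<Sum>r<k. a r * G r c) else 0) | a. \<forall>r<k. a r \<in> subfield_Fq q}"

definition dual_code :: "nat \<Rightarrow> nat \<Rightarrow> (nat \<Rightarrow> 'a::field) set \<Rightarrow> (nat \<Rightarrow> 'a) set" where
  "dual_code q N C = {v \<in> words q N. \<forall>c\<in>C. (\<Sum>i<N. v i * c i) = 0}"

definition weight :: "nat \<Rightarrow> (nat \<Rightarrow> 'a::zero) \<Rightarrow> nat" where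
  "weight N v = card {i. i < N \<and> v i \<noteq> 0}"

definition min_dist :: "nat \<Rightarrow> (nat \<Rightarrow> 'a::zero) set \<Rightarrow> nat" where
  "min_dist N C = Min (weight N ` (C - {(\<lambda>_. 0)}))"

definition code_params :: "nat \<Rightarrow> (nat \<Rightarrow> 'a::field) set \<Rightarrow> nat \<Rightarrow> nat \<Rightarrow> nat \<Rightarrow> bool" where
  "code_params q C N k d \<longleftrightarrow> C \<subseteq> words q N \<and> card C = q ^ k \<and> min_dist N C = d"

text \<open>The matrix G_2' = [I_{m+1} : G_2], rows 0..m, columns 0..m+n; d enumerates D.\<close>
definition G2' :: "nat \<Rightarrow> nat \<Rightarrow> 'a::field \<Rightarrow> (nat \<Rightarrow> 'a) \<Rightarrow> nat \<Rightarrow> nat \<Rightarrow> 'a" where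
  "G2' q m \<alpha> d r c =
     (if c < m + 1 then (if r = c then 1 else 0)
      else (let j = c - (m + 1) in
            if r = 0 then 1
            else if r = 1 then trace q m (d j)
            else if r = 2 then trace q m (\<alpha> * d j) + 1
            else trace q m (\<alpha> ^ (r - 1) * d j)))"

end

(*
  Write F = F_{q^m}, K = F_q, D = {x. Tr(x^2) = 0} and N(b, t) = #{x in D. Tr(b x) = t}.

  The generator matrix [I_{m+1} : G_2] is systematic, so the code has q^(m+1) words and its dual
  consists of the words (-G_2 w, w); this gives the dimensions once |D| = q^(m-1) is known.  Since m
  is odd, a nonsquare c of K stays a nonsquare in F, so x -> x^2 and x -> c x^2 together take every
  value exactly twice; as Tr(c x^2) = c Tr(x^2), this gives |D| = |ker Tr| = q^(m-1).

  The message a yields the word whose part on D is (Tr(b x) + a_0 + a_2)_{x in D}, where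
  b = sum a_{i+1} alpha^i.  If b = 0, then, 1, alpha, ..., alpha^(m-1) being independent over K,
  only a_0 is nonzero and the weight exceeds |D|.  Otherwise the weight on D is |D| - N(b, -a_0 - a_2).
  Expanding both conditions with additive characters gives
    q^2 N(b, t) = q^m + sum_{u in K^*} G(u) g(u),
  with G(u) a quadratic Gauss sum of F (absolute value q^(m/2)) and g(u) one of K (absolute value
  q^(1/2)), the error vanishing altogether when Tr(b^2) = 0.  Hence N(b, t) is at most
  q^(m-2) + (q-1) q^((m-3)/2), which is exactly |D| minus the claimed bound.

  No column of G_2 is zero (its first row consists of ones), so the dual has minimum distance at
  least 2, and the column of the point 0 of D has exactly two nonzero entries, which gives a dual
  word of weight 3.
*)

theory Submission
  imports Defs "HOL-Computational_Algebra.Polynomial" "HOL-Library.FuncSet"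
    "HOL-Library.Real_Mod" "HOL-Number_Theory.Cong"
begin

section \<open>Finite fields and trace maps\<close>

lemma card_vimage_eq_sum:
  fixes f :: "'a :: finite \<Rightarrow> 'b"
  assumes "finite S"
  shows "card {x. f x \<in> S} = (\<Sum>y\<in>S. card {x. f x = y})"
proof -
  have "{x. f x \<in> S} = (\<Union>y\<in>S. {x. f x = y})" by auto
  also have "card \<dots> = (\<Sum>y\<in>S. card {x. f x = y})"
    using assms by (intro card_UN_disjoint) auto
  finally show ?thesis .
qed

lemma sum_if_eq_card: "finite A \<Longrightarrow> (\<Sum>x\<in>A. if P x then c else 0) = of_nat (card {x\<in>A. P x}) * c"
  by (simp add: sum.inter_filter[symmetric])

lemma sum_lessThan_add: "(\<Sum>i<a + b :: nat. f i) = (\<Sum>i<a. f i) + (\<Sum>j<b. f (a + j))"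
  by (induction b) (simp_all add: add.assoc)

lemma of_nat_card_eq_0: "of_nat (card (UNIV :: 'a set)) = (0 :: 'a :: {finite, ring_1})"
proof -
  have "(\<Sum>y\<in>UNIV. y + 1) = (\<Sum>y\<in>UNIV. y :: 'a)"
    by (rule sum.reindex_bij_witness[of _ "\<lambda>y. y - 1" "\<lambda>y. y + 1"]) auto
  thus ?thesis by (simp add: sum.distrib)
qed

lemma prime_CHAR_finite_field: "prime CHAR('a :: {finite, field})"
  using prime_CHAR_semidom finite_imp_CHAR_pos[where 'a = 'a] by simp

lemma CHAR_eq_of_card_prime_power:
  assumes "prime p" and "card (UNIV :: 'a :: {finite, field} set) = p ^ k"
  shows "CHAR('a) = p"
proof -
  have "CHAR('a) dvd p ^ k"
    using of_nat_card_eq_0[where 'a = 'a] assms(2) of_nat_eq_0_iff_char_dvd by metis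
  hence "CHAR('a) dvd p"
    using prime_CHAR_finite_field[where 'a = 'a] prime_dvd_power by blast
  thus ?thesis
    using assms(1) prime_CHAR_finite_field[where 'a = 'a] primes_dvd_imp_eq by blast
qed

lemma power_card_eq_self: "x ^ card (UNIV :: 'a set) = (x :: 'a :: {finite, field})"
proof (cases "x = 0")
  case False
  let ?P = "\<Prod>y\<in>-{0}. y :: 'a"
  have "(\<Prod>y\<in>-{0}. x * y) = ?P"
    by (rule prod.reindex_bij_witness[of _ "\<lambda>y. y / x" "\<lambda>y. x * y"]) (use False in auto)
  hence "x ^ card (-{0 :: 'a}) * ?P = ?P"
    by (simp add: prod.distrib)
  moreover have "?P \<noteq> 0" by simp
  ultimately have "x ^ card (-{0 :: 'a}) = 1" by simp
  moreover have "card (UNIV :: 'a set) = Suc (card (-{0 :: 'a}))"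
    using finite_UNIV_card_ge_0[where 'a = 'a] by (simp add: Compl_eq_Diff_UNIV card_Diff_singleton)
  ultimately show ?thesis by simp
qed (simp add: finite_UNIV_card_ge_0)

lemma card_roots_sum_powers_le:
  fixes f :: "nat \<Rightarrow> nat"
  assumes "n > 0" and "strict_mono f"
  shows "card {x :: 'a :: idom. (\<Sum>i<n. x ^ f i) = 0} \<le> f (n - 1)"
proof -
  define P :: "'a poly" where "P = (\<Sum>i<n. monom 1 (f i))"
  have "coeff P (f (n - 1)) = (\<Sum>i<n. if i = n - 1 then 1 else 0)"
    unfolding P_def coeff_sum coeff_monom
    using strict_mono_eq[OF assms(2)] by (intro sum.cong) auto
  hence "P \<noteq> 0" using assms(1) by auto
  hence "card {x. poly P x = 0} \<le> degree P"
    by (rule card_poly_roots_bound)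
  also have "degree P \<le> f (n - 1)"
    unfolding P_def
  proof (rule degree_sum_le)
    fix i assume "i \<in> {..<n}"
    hence "f i \<le> f (n - 1)" using assms(2) by (simp add: strict_mono_less_eq)
    thus "degree (monom (1 :: 'a) (f i)) \<le> f (n - 1)"
      using degree_monom_le order_trans by blast
  qed simp
  finally show ?thesis by (simp add: P_def poly_sum poly_monom)
qed

lemma add_power_CHAR_power:
  assumes "prime CHAR('a :: comm_semiring_1)" and "Q = CHAR('a) ^ k"
  shows "(x + y :: 'a) ^ (Q ^ i) = x ^ (Q ^ i) + y ^ (Q ^ i)"
  by (rule freshmans_dream'[OF assms(1), where n = "k * i"]) (simp add: assms(2) power_mult)

lemma sum_power_CHAR_power:
  assumes "prime CHAR('a :: comm_semiring_1)" and "Q = CHAR('a) ^ k"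
  shows "sum f A ^ (Q ^ i) = (\<Sum>j\<in>A. (f j :: 'a) ^ (Q ^ i))"
  by (rule freshmans_dream_sum'[OF assms(1), where n = "k * i"]) (simp add: assms(2) power_mult)

lemma power_power_eq_self: "c ^ Q = c \<Longrightarrow> c ^ (Q ^ i) = (c :: 'a :: monoid_mult)"
  by (induction i) (simp_all add: power_mult)

lemma trace_add:
  assumes "prime CHAR('a :: field)" and "Q = CHAR('a) ^ k"
  shows "trace Q M (x + y) = trace Q M x + trace Q M (y :: 'a)"
  unfolding trace_def by (simp add: add_power_CHAR_power[OF assms] sum.distrib)

lemma trace_sum:
  assumes "prime CHAR('a :: field)" and "Q = CHAR('a) ^ k"
  shows "trace Q M (sum f A) = (\<Sum>j\<in>A. trace Q M (f j :: 'a))"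
  unfolding trace_def by (simp add: sum_power_CHAR_power[OF assms] sum.swap[of _ A])

lemma trace_scale: "c ^ Q = c \<Longrightarrow> trace Q M (c * x) = c * trace Q M (x :: 'a :: field)"
  by (simp add: trace_def power_mult_distrib power_power_eq_self sum_distrib_left)

lemma trace_power_eq_self:
  assumes "prime CHAR('a :: field)" and "Q = CHAR('a) ^ k" and "x ^ (Q ^ M) = (x :: 'a)"
  shows "trace Q M x ^ Q = trace Q M x"
proof -
  let ?f = "\<lambda>i. x ^ (Q ^ i)"
  have "trace Q M x ^ Q = (\<Sum>i<M. ?f i ^ (Q ^ 1))"
    using sum_power_CHAR_power[OF assms(1,2), of ?f "{..<M}" 1] by (simp add: trace_def)
  also have "\<dots> = (\<Sum>i<M. ?f (Suc i))"
    by (simp add: power_mult[symmetric] mult.commute)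
  also have "\<dots> = (\<Sum>i<M. ?f i)"
    using sum.lessThan_Suc_shift[of ?f M] assms(3) by (simp add: add.commute)
  finally show ?thesis by (simp add: trace_def)
qed

lemma card_trace_eq_0_le:
  assumes "Q \<ge> 2" and "M > 0"
  shows "card {x :: 'a :: field. trace Q M x = 0} \<le> Q ^ (M - 1)"
  unfolding trace_def using assms
  by (intro card_roots_sum_powers_le) (auto simp: strict_mono_def)

lemma of_nat_power_CHAR:
  assumes "prime CHAR('a :: comm_semiring_1)"
  shows "(of_nat k :: 'a) ^ CHAR('a) = of_nat k"
proof (induction k)
  case 0 thus ?case using assms prime_gt_0_nat by (simp add: zero_power)
next
  case (Suc k)
  thus ?case by (simp add: freshmans_dream[OF assms refl])
qed

lemma prime_field_eq_of_nat_image: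
  assumes "prime CHAR('a :: field)"
  shows "{y :: 'a. y ^ CHAR('a) = y} = of_nat ` {..<CHAR('a)}"
proof (rule card_seteq[symmetric])
  let ?p = "CHAR('a)"
  define P :: "'a poly" where "P = monom 1 ?p - monom 1 1"
  have "?p \<ge> 2" using assms prime_ge_2_nat by blast
  hence "P \<noteq> 0" by (auto simp: P_def dest: arg_cong[where f = "\<lambda>P. coeff P ?p"])
  hence roots: "finite {y. poly P y = 0}" "card {y. poly P y = 0} \<le> degree P"
    by (simp_all add: poly_roots_finite card_poly_roots_bound)
  have P_eq: "{y. poly P y = 0} = {y :: 'a. y ^ ?p = y}"
    by (simp add: P_def poly_monom)
  show "finite {y :: 'a. y ^ ?p = y}" using roots P_eq by simp
  show "of_nat ` {..<?p} \<subseteq> {y :: 'a. y ^ ?p = y}"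
    using of_nat_power_CHAR[OF assms] by auto
  have "inj_on (of_nat :: nat \<Rightarrow> 'a) {..<?p}"
    by (auto intro!: inj_onI simp: of_nat_eq_iff_cong_CHAR cong_less_modulus_unique_nat)
  hence "card (of_nat ` {..<?p} :: 'a set) = ?p" by (simp add: card_image)
  moreover have "degree P \<le> ?p"
    unfolding P_def using \<open>?p \<ge> 2\<close> by (intro degree_diff_le) (auto simp: degree_monom_eq)
  ultimately show "card {y :: 'a. y ^ ?p = y} \<le> card (of_nat ` {..<?p} :: 'a set)"
    using roots P_eq by simp
qed

section \<open>Additive characters and Gauss sums\<close>

text \<open>For \<open>y = of_nat k\<close> this is \<open>exp (2 \<pi> i k / p)\<close>, where \<open>p = CHAR('a)\<close>; outside the prime field
  \<open>{y. y ^ p = y}\<close> the value is meaningless.\<close>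

definition prime_field_character :: "'a :: semiring_1 \<Rightarrow> complex" where
  "prime_field_character y = cis (2 * pi / CHAR('a)) ^ (SOME k. of_nat k = y)"

lemma cis_root_of_unity_power_mod:
  fixes p k :: nat
  assumes "p > 0"
  shows "cis (2 * pi / p) ^ k = cis (2 * pi / p) ^ (k mod p)"
proof -
  let ?\<omega> = "cis (2 * pi / p)"
  have "?\<omega> ^ p = 1" using assms by (simp add: DeMoivre)
  have "?\<omega> ^ k = ?\<omega> ^ (p * (k div p) + k mod p)" by simp
  also have "\<dots> = (?\<omega> ^ p) ^ (k div p) * ?\<omega> ^ (k mod p)"
    by (simp only: power_add power_mult)
  finally show ?thesis using \<open>?\<omega> ^ p = 1\<close> by simp
qed

lemma cis_root_of_unity_power_eq_1_iff:
  fixes p k :: nat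
  assumes "p > 0"
  shows "cis (2 * pi / p) ^ k = 1 \<longleftrightarrow> p dvd k"
proof -
  have "real k * (2 * pi / p) = of_int n * (2 * pi) \<longleftrightarrow> int k = n * int p" for n
  proof -
    have "real k * (2 * pi / p) = of_int n * (2 * pi) \<longleftrightarrow> real k = of_int n * p"
      using assms by (simp add: field_simps)
    also have "\<dots> \<longleftrightarrow> int k = n * int p"
      by (metis of_int_eq_iff of_int_mult of_int_of_nat_eq)
    finally show ?thesis .
  qed
  hence "cis (2 * pi / p) ^ k = 1 \<longleftrightarrow> (\<exists>n. int k = n * int p)"
    by (simp add: DeMoivre cis_eq_1_iff)
  also have "\<dots> \<longleftrightarrow> p dvd k"
    by (metis dvd_def int_dvd_int_iff mult.commute)
  finally show ?thesis .
qed

lemma prime_field_character_of_nat: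
  assumes "CHAR('a :: semiring_1_cancel) > 0"
  shows "prime_field_character (of_nat k :: 'a) = cis (2 * pi / CHAR('a)) ^ k"
proof -
  define k' where "k' = (SOME k'. of_nat k' = (of_nat k :: 'a))"
  have "of_nat k' = (of_nat k :: 'a)" unfolding k'_def by (rule someI) (rule refl)
  hence "k' mod CHAR('a) = k mod CHAR('a)" by (simp add: of_nat_eq_iff_cong_CHAR cong_def)
  thus ?thesis
    unfolding prime_field_character_def k'_def[symmetric]
    using cis_root_of_unity_power_mod[OF assms, of k] cis_root_of_unity_power_mod[OF assms, of k']
    by simp
qed

lemma norm_prime_field_character [simp]: "norm (prime_field_character y) = 1"
  by (simp add: prime_field_character_def norm_power)

lemma prime_field_elem_eq_of_nat:
  assumes "prime CHAR('a :: field)" and "y ^ CHAR('a) = (y :: 'a)"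
  obtains k where "y = of_nat k"
proof -
  have "y \<in> {y. y ^ CHAR('a) = y}" using assms(2) by simp
  thus ?thesis unfolding prime_field_eq_of_nat_image[OF assms(1)] using that by blast
qed

lemma prime_field_character_add:
  assumes "prime CHAR('a :: field)" and "y ^ CHAR('a) = y" and "z ^ CHAR('a) = (z :: 'a)"
  shows "prime_field_character (y + z) = prime_field_character y * prime_field_character z"
proof -
  obtain i j where "y = of_nat i" "z = of_nat j"
    using prime_field_elem_eq_of_nat assms by metis
  moreover have "CHAR('a) > 0" using assms(1) prime_gt_0_nat by blast
  ultimately show ?thesis
    by (simp add: prime_field_character_of_nat power_add flip: of_nat_add)
qed

lemma prime_field_character_eq_1_iff:
  assumes "prime CHAR('a :: field)" and "y ^ CHAR('a) = (y :: 'a)"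
  shows "prime_field_character y = 1 \<longleftrightarrow> y = 0"
proof -
  obtain k where "y = of_nat k"
    using prime_field_elem_eq_of_nat assms by metis
  moreover have "CHAR('a) > 0" using assms(1) prime_gt_0_nat by blast
  ultimately show ?thesis
    by (simp add: prime_field_character_of_nat cis_root_of_unity_power_eq_1_iff
        of_nat_eq_0_iff_char_dvd)
qed

locale finite_subfield =
  fixes S :: "'a :: field set"
  assumes finite [simp]: "finite S"
    and zero_mem [simp]: "0 \<in> S" and one_mem [simp]: "1 \<in> S"
    and add_mem: "x \<in> S \<Longrightarrow> y \<in> S \<Longrightarrow> x + y \<in> S"
    and uminus_mem: "x \<in> S \<Longrightarrow> - x \<in> S"
    and mult_mem: "x \<in> S \<Longrightarrow> y \<in> S \<Longrightarrow> x * y \<in> S"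
    and inverse_mem: "x \<in> S \<Longrightarrow> inverse x \<in> S"
begin

lemma diff_mem: "x \<in> S \<Longrightarrow> y \<in> S \<Longrightarrow> x - y \<in> S"
  using add_mem[of x "- y"] uminus_mem[of y] by simp

lemma divide_mem: "x \<in> S \<Longrightarrow> y \<in> S \<Longrightarrow> x / y \<in> S"
  using mult_mem[of x "inverse y"] inverse_mem[of y] by (simp only: divide_inverse)

lemma power_mem: "x \<in> S \<Longrightarrow> x ^ k \<in> S"
  by (induction k) (simp_all add: mult_mem)

lemma sum_mem: "(\<And>i. i \<in> A \<Longrightarrow> f i \<in> S) \<Longrightarrow> sum f A \<in> S"
  by (induction A rule: infinite_finite_induct) (simp_all add: add_mem)

lemma numeral_mem [simp]: "numeral n \<in> S"
  using sum_mem[of "{..<numeral n :: nat}" "\<lambda>_. 1"] by simp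

lemmas closure = add_mem uminus_mem mult_mem inverse_mem diff_mem divide_mem power_mem sum_mem

end

locale nontrivial_additive_character = finite_subfield S for S :: "'a :: field set" +
  fixes \<phi> :: "'a \<Rightarrow> complex"
  assumes character_add: "x \<in> S \<Longrightarrow> y \<in> S \<Longrightarrow> \<phi> (x + y) = \<phi> x * \<phi> y"
    and norm_character: "x \<in> S \<Longrightarrow> norm (\<phi> x) = 1"
    and nontrivial: "\<exists>x\<in>S. \<phi> x \<noteq> 1"
begin

lemma character_0 [simp]: "\<phi> 0 = 1"
proof -
  have "\<phi> 0 * \<phi> 0 = \<phi> 0 * 1" using character_add[of 0 0] by simp
  moreover have "\<phi> 0 \<noteq> 0" using norm_character[of 0] by auto
  ultimately show ?thesis by (metis mult_cancel_left)
qed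

lemma character_mult_cnj: "x \<in> S \<Longrightarrow> \<phi> x * cnj (\<phi> x) = 1"
  using complex_norm_square[of "\<phi> x"] norm_character[of x] by simp

lemma character_diff:
  assumes "x \<in> S" "y \<in> S"
  shows "\<phi> (x - y) = \<phi> x * cnj (\<phi> y)"
proof -
  have "\<phi> (x - y) = \<phi> (x - y) * (\<phi> y * cnj (\<phi> y))"
    using character_mult_cnj[OF assms(2)] by simp
  also have "\<dots> = \<phi> x * cnj (\<phi> y)"
    using character_add[of "x - y" y] assms by (simp add: diff_mem mult.assoc)
  finally show ?thesis .
qed

lemma sum_character: "(\<Sum>x\<in>S. \<phi> x) = 0"
proof -
  obtain x0 where x0: "x0 \<in> S" "\<phi> x0 \<noteq> 1" using nontrivial by blast
  have "(\<Sum>x\<in>S. \<phi> x) = (\<Sum>x\<in>S. \<phi> (x + x0))"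
    by (rule sum.reindex_bij_witness[of _ "\<lambda>x. x + x0" "\<lambda>x. x - x0"])
      (use x0 in \<open>auto intro: closure\<close>)
  also have "\<dots> = \<phi> x0 * (\<Sum>x\<in>S. \<phi> x)"
    using x0 by (simp add: character_add sum_distrib_left mult.commute)
  finally show ?thesis using x0(2) by (metis mult_cancel_right2)
qed

lemma sum_character_mult:
  assumes "t \<in> S"
  shows "(\<Sum>u\<in>S. \<phi> (t * u)) = (if t = 0 then of_nat (card S) else 0)"
proof (cases "t = 0")
  case False
  have "(\<Sum>u\<in>S. \<phi> (t * u)) = (\<Sum>u\<in>S. \<phi> u)"
    by (rule sum.reindex_bij_witness[of _ "\<lambda>u. u / t" "\<lambda>u. t * u"])
      (use False assms in \<open>auto intro: closure\<close>)
  thus ?thesis using False sum_character by simp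
qed simp

text \<open>The Gauss sum argument: expanding the square and substituting \<open>v = w + h\<close> leaves a
  character sum in \<open>w\<close> that vanishes unless \<open>h = 0\<close>.\<close>

lemma norm_quadratic_character_sum_sq:
  assumes "(2 :: 'a) \<noteq> 0" and "a \<in> S" "a \<noteq> 0" and "b \<in> S"
  shows "(norm (\<Sum>v\<in>S. \<phi> (a * v\<^sup>2 + b * v)))\<^sup>2 = card S"
proof -
  define f where "f v = a * v\<^sup>2 + b * v" for v
  have f_mem: "f v \<in> S" if "v \<in> S" for v
    unfolding f_def using assms that by (intro closure)
  let ?g = "\<Sum>v\<in>S. \<phi> (f v)"
  have "?g * cnj ?g = (\<Sum>v\<in>S. \<Sum>w\<in>S. \<phi> (f v) * cnj (\<phi> (f w)))"
    by (simp add: cnj_sum sum_product)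
  also have "\<dots> = (\<Sum>w\<in>S. \<Sum>v\<in>S. \<phi> (f v - f w))"
    by (subst sum.swap) (simp add: character_diff f_mem)
  also have "\<dots> = (\<Sum>w\<in>S. \<Sum>h\<in>S. \<phi> (f (w + h) - f w))"
    by (intro sum.cong refl sum.reindex_bij_witness[of _ "\<lambda>v. v - w" "\<lambda>h. w + h" for w])
      (auto intro: closure)
  also have "\<dots> = (\<Sum>w\<in>S. \<Sum>h\<in>S. \<phi> (f h) * \<phi> ((2 * a * h) * w))"
  proof (intro sum.cong refl)
    fix w h assume "w \<in> S" "h \<in> S"
    moreover have "f (w + h) - f w = f h + (2 * a * h) * w"
      by (simp add: f_def algebra_simps power2_eq_square)
    ultimately show "\<phi> (f (w + h) - f w) = \<phi> (f h) * \<phi> ((2 * a * h) * w)"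
      using assms by (simp add: character_add f_mem closure)
  qed
  also have "\<dots> = (\<Sum>h\<in>S. \<phi> (f h) * (\<Sum>w\<in>S. \<phi> ((2 * a * h) * w)))"
    by (subst sum.swap) (simp add: sum_distrib_left)
  also have "\<dots> = (\<Sum>h\<in>S. if h = 0 then of_nat (card S) else 0)"
    using assms by (intro sum.cong refl) (auto simp: sum_character_mult closure f_def)
  also have "\<dots> = of_nat (card S)" by simp
  finally have "complex_of_real ((norm ?g)\<^sup>2) = complex_of_real (card S)"
    by (simp only: complex_norm_square of_real_of_nat_eq)
  thus ?thesis unfolding f_def using of_real_eq_iff by blast
qed

end

section \<open>Linear codes with a systematic generator matrix\<close>

lemma weight_add_blocks:
  "weight (k + n) v = card {i. i < k \<and> v i \<noteq> 0} + card {j. j < n \<and> v (k + j) \<noteq> 0}"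
proof -
  have "{i. i < k + n \<and> v i \<noteq> 0} =
      {i. i < k \<and> v i \<noteq> 0} \<union> (\<lambda>j. k + j) ` {j. j < n \<and> v (k + j) \<noteq> 0}"
    by (auto simp: image_iff) (metis add_diff_inverse_nat add_less_cancel_left)
  moreover have "card ((\<lambda>j. k + j) ` {j. j < n \<and> v (k + j) \<noteq> 0}) = card {j. j < n \<and> v (k + j) \<noteq> 0}"
    by (rule card_image) simp
  moreover have "card ({i. i < k \<and> v i \<noteq> 0} \<union> (\<lambda>j. k + j) ` {j. j < n \<and> v (k + j) \<noteq> 0}) =
      card {i. i < k \<and> v i \<noteq> 0} + card ((\<lambda>j. k + j) ` {j. j < n \<and> v (k + j) \<noteq> 0})"
    by (rule card_Un_disjoint) auto
  ultimately show ?thesis unfolding weight_def by simp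
qed

lemma min_dist_geI:
  assumes "finite C" and "w \<in> C" "w \<noteq> (\<lambda>_. 0)"
    and "\<And>c. c \<in> C \<Longrightarrow> c \<noteq> (\<lambda>_. 0) \<Longrightarrow> b \<le> weight N c"
  shows "b \<le> min_dist N C"
  unfolding min_dist_def using assms by (subst Min_ge_iff) auto

lemma min_dist_le_weight:
  assumes "finite C" and "c \<in> C" "c \<noteq> (\<lambda>_. 0)"
  shows "min_dist N C \<le> weight N c"
  unfolding min_dist_def using assms by (intro Min_le) auto

lemma bij_betw_restrict_words:
  "bij_betw (\<lambda>v. restrict v {..<n}) (words q n) (PiE {..<n} (\<lambda>_. subfield_Fq q :: 'a :: field set))"
  by (rule bij_betw_byWitness[where f' = "\<lambda>f i. if i < n then f i else 0"])
    (auto simp: words_def PiE_def extensional_def fun_eq_iff)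

lemma card_words:
  "card (words q n :: (nat \<Rightarrow> 'a :: field) set) = card (subfield_Fq q :: 'a set) ^ n"
  using bij_betw_same_card[OF bij_betw_restrict_words[where 'a = 'a]] by (simp add: card_PiE)

lemma finite_words:
  "finite (subfield_Fq q :: 'a set) \<Longrightarrow> finite (words q n :: (nat \<Rightarrow> 'a :: field) set)"
  using bij_betw_finite[OF bij_betw_restrict_words[where 'a = 'a]] by (simp add: finite_PiE)

definition codeword :: "nat \<Rightarrow> nat \<Rightarrow> (nat \<Rightarrow> nat \<Rightarrow> 'a :: field) \<Rightarrow> (nat \<Rightarrow> 'a) \<Rightarrow> nat \<Rightarrow> 'a" where
  "codeword k N G a = (\<lambda>c. if c < N then (\<Sum>r<k. a r * G r c) else 0)"

lemma gen_code_eq_image: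
  "gen_code q k N G = codeword k N G ` words q k"
proof
  show "gen_code q k N G \<subseteq> codeword k N G ` words q k"
  proof
    fix v assume "v \<in> gen_code q k N G"
    then obtain a where a: "\<forall>r<k. a r \<in> subfield_Fq q" "v = codeword k N G a"
      unfolding gen_code_def codeword_def by blast
    define a' where "a' r = (if r < k then a r else 0)" for r
    have "a' \<in> words q k" using a by (simp add: a'_def words_def)
    moreover have "codeword k N G a' = v"
      by (auto simp: a a'_def codeword_def intro!: ext sum.cong)
    ultimately show "v \<in> codeword k N G ` words q k" by blast
  qed
qed (auto simp: gen_code_def codeword_def words_def)

lemma gen_code_subset_words:
  fixes G :: "nat \<Rightarrow> nat \<Rightarrow> 'a :: field"
  assumes "finite_subfield (subfield_Fq q :: 'a set)"
    and "\<And>r c. r < k \<Longrightarrow> c < N \<Longrightarrow> G r c \<in> subfield_Fq q"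
  shows "gen_code q k N G \<subseteq> words q N"
proof -
  interpret finite_subfield "subfield_Fq q :: 'a set" by (rule assms(1))
  show ?thesis using assms(2)
    by (auto simp: gen_code_def words_def intro!: sum_mem mult_mem)
qed

definition systematic_matrix :: "nat \<Rightarrow> (nat \<Rightarrow> nat \<Rightarrow> 'a :: {zero, one}) \<Rightarrow> nat \<Rightarrow> nat \<Rightarrow> 'a" where
  "systematic_matrix k A r c = (if c < k then (if r = c then 1 else 0) else A r (c - k))"

definition parity_word :: "nat \<Rightarrow> nat \<Rightarrow> (nat \<Rightarrow> nat \<Rightarrow> 'a :: field) \<Rightarrow> (nat \<Rightarrow> 'a) \<Rightarrow> nat \<Rightarrow> 'a" where
  "parity_word k n A w =
     (\<lambda>i. if i < k then - (\<Sum>j<n. A i j * w j) else if i < k + n then w (i - k) else 0)"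

context
  fixes k n :: nat and A :: "nat \<Rightarrow> nat \<Rightarrow> 'a :: field"
begin

lemma codeword_systematic_info:
  "i < k \<Longrightarrow> codeword k (k + n) (systematic_matrix k A) a i = a i"
  by (simp add: codeword_def systematic_matrix_def if_distrib[of "(*) _"] cong: if_cong)

lemma codeword_systematic_parity:
  "j < n \<Longrightarrow> codeword k (k + n) (systematic_matrix k A) a (k + j) = (\<Sum>r<k. a r * A r j)"
  by (simp add: codeword_def systematic_matrix_def)

lemma weight_codeword_systematic:
  "weight (k + n) (codeword k (k + n) (systematic_matrix k A) a) =
     card {r. r < k \<and> a r \<noteq> 0} + card {j. j < n \<and> (\<Sum>r<k. a r * A r j) \<noteq> 0}"
  unfolding weight_add_blocks
  by (simp add: codeword_systematic_info codeword_systematic_parity cong: conj_cong)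

lemma card_gen_code_systematic:
  "card (gen_code q k (k + n) (systematic_matrix k A)) = card (subfield_Fq q :: 'a set) ^ k"
proof -
  let ?c = "codeword k (k + n) (systematic_matrix k A)"
  have "inj_on ?c (words q k)"
  proof (rule inj_onI)
    fix a b assume a: "a \<in> words q k" and b: "b \<in> words q k" and eq: "?c a = ?c b"
    show "a = b"
    proof
      fix i show "a i = b i"
      proof (cases "i < k")
        case True
        thus ?thesis using arg_cong[OF eq, of "\<lambda>c. c i"] by (simp add: codeword_systematic_info)
      qed (use a b in \<open>simp add: words_def\<close>)
    qed
  qed
  hence "card (?c ` words q k) = card (words q k :: (nat \<Rightarrow> 'a) set)" by (rule card_image)
  thus ?thesis by (simp only: gen_code_eq_image card_words)
qed

lemma inner_codeword_systematic:
  "(\<Sum>i<k + n. v i * codeword k (k + n) (systematic_matrix k A) a i) =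
     (\<Sum>r<k. a r * (v r + (\<Sum>j<n. A r j * v (k + j))))"
proof -
  have row: "(\<Sum>i<k + n. v i * systematic_matrix k A r i) = v r + (\<Sum>j<n. A r j * v (k + j))"
    if "r < k" for r
  proof -
    have "(\<Sum>i<k. v i * systematic_matrix k A r i) = (\<Sum>i<k. if i = r then v i else 0)"
      by (intro sum.cong) (auto simp: systematic_matrix_def)
    thus ?thesis
      using that by (simp add: sum_lessThan_add systematic_matrix_def mult.commute)
  qed
  have "(\<Sum>i<k + n. v i * codeword k (k + n) (systematic_matrix k A) a i) =
      (\<Sum>i<k + n. \<Sum>r<k. a r * (v i * systematic_matrix k A r i))"
    by (simp add: codeword_def sum_distrib_left mult.left_commute)
  also have "\<dots> = (\<Sum>r<k. a r * (\<Sum>i<k + n. v i * systematic_matrix k A r i))"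
    by (subst sum.swap) (simp add: sum_distrib_left)
  finally show ?thesis by (simp add: row)
qed

lemma dual_code_systematic_iff:
  assumes "finite_subfield (subfield_Fq q :: 'a set)"
  shows "v \<in> dual_code q (k + n) (gen_code q k (k + n) (systematic_matrix k A)) \<longleftrightarrow>
     v \<in> words q (k + n) \<and> (\<forall>r<k. v r + (\<Sum>j<n. A r j * v (k + j)) = 0)"
proof -
  interpret finite_subfield "subfield_Fq q :: 'a set" by (rule assms(1))
  let ?C = "gen_code q k (k + n) (systematic_matrix k A)"
  let ?c = "codeword k (k + n) (systematic_matrix k A)"
  have orth_iff: "(\<forall>c\<in>?C. (\<Sum>i<k + n. v i * c i) = 0) \<longleftrightarrow>
      (\<forall>r<k. v r + (\<Sum>j<n. A r j * v (k + j)) = 0)"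
  proof
    assume orth: "\<forall>c\<in>?C. (\<Sum>i<k + n. v i * c i) = 0"
    show "\<forall>r<k. v r + (\<Sum>j<n. A r j * v (k + j)) = 0"
    proof (intro allI impI)
      fix r assume "r < k"
      let ?e = "\<lambda>i. if i = r then 1 else 0 :: 'a"
      let ?L = "\<lambda>r. v r + (\<Sum>j<n. A r j * v (k + j))"
      have "?e \<in> words q k" using \<open>r < k\<close> by (simp add: words_def)
      hence "?c ?e \<in> ?C" unfolding gen_code_eq_image by (rule imageI)
      hence "(\<Sum>i<k + n. v i * ?c ?e i) = 0" using orth by blast
      moreover have "(\<Sum>r'<k. ?e r' * ?L r') = (\<Sum>r'<k. if r' = r then ?L r' else 0)"
        by (rule sum.cong) auto
      ultimately show "?L r = 0"
        using \<open>r < k\<close> by (simp add: inner_codeword_systematic)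
    qed
  qed (auto simp: gen_code_eq_image inner_codeword_systematic)
  thus ?thesis by (simp add: dual_code_def)
qed

lemma dual_code_systematic:
  assumes "finite_subfield (subfield_Fq q :: 'a set)"
    and "\<And>r j. r < k \<Longrightarrow> j < n \<Longrightarrow> A r j \<in> subfield_Fq q"
  shows "dual_code q (k + n) (gen_code q k (k + n) (systematic_matrix k A)) =
     parity_word k n A ` words q n"
proof (rule set_eqI)
  interpret finite_subfield "subfield_Fq q :: 'a set" by (rule assms(1))
  fix v
  have "v \<in> words q (k + n) \<and> (\<forall>r<k. v r + (\<Sum>j<n. A r j * v (k + j)) = 0) \<longleftrightarrow>
      v \<in> parity_word k n A ` words q n"
  proof
    assume v: "v \<in> words q (k + n) \<and> (\<forall>r<k. v r + (\<Sum>j<n. A r j * v (k + j)) = 0)"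
    define w where "w j = (if j < n then v (k + j) else 0)" for j
    have "w \<in> words q n" using v by (simp add: w_def words_def)
    moreover have "parity_word k n A w = v"
    proof
      fix i show "parity_word k n A w i = v i"
      proof (cases "i < k")
        case True
        hence "v i = - (\<Sum>j<n. A i j * v (k + j))" using v by (simp add: eq_neg_iff_add_eq_0)
        thus ?thesis using True by (simp add: parity_word_def w_def)
      qed (use v in \<open>auto simp: parity_word_def w_def words_def\<close>)
    qed
    ultimately show "v \<in> parity_word k n A ` words q n" by blast
  next
    assume "v \<in> parity_word k n A ` words q n"
    then obtain w where "w \<in> words q n" "v = parity_word k n A w" by blast
    thus "v \<in> words q (k + n) \<and> (\<forall>r<k. v r + (\<Sum>j<n. A r j * v (k + j)) = 0)"
      using assms(2) by (auto simp: words_def parity_word_def intro!: closure)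
  qed
  thus "v \<in> dual_code q (k + n) (gen_code q k (k + n) (systematic_matrix k A)) \<longleftrightarrow>
      v \<in> parity_word k n A ` words q n"
    by (simp add: dual_code_systematic_iff[OF assms(1)])
qed

lemma parity_word_parity: "j < n \<Longrightarrow> parity_word k n A w (k + j) = w j"
  by (simp add: parity_word_def)

lemma weight_parity_word:
  "weight (k + n) (parity_word k n A w) =
     card {r. r < k \<and> (\<Sum>j<n. A r j * w j) \<noteq> 0} + card {j. j < n \<and> w j \<noteq> 0}"
  unfolding weight_add_blocks by (simp add: parity_word_def cong: conj_cong)

lemma card_dual_code_systematic:
  assumes "finite_subfield (subfield_Fq q :: 'a set)"
    and "\<And>r j. r < k \<Longrightarrow> j < n \<Longrightarrow> A r j \<in> subfield_Fq q"
  shows "card (dual_code q (k + n) (gen_code q k (k + n) (systematic_matrix k A))) =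
     card (subfield_Fq q :: 'a set) ^ n"
proof -
  have "inj_on (parity_word k n A) (words q n)"
  proof (rule inj_onI)
    fix w w' assume w: "w \<in> words q n" and w': "w' \<in> words q n"
      and eq: "parity_word k n A w = parity_word k n A w'"
    show "w = w'"
    proof
      fix j show "w j = w' j"
      proof (cases "j < n")
        case True
        thus ?thesis using arg_cong[OF eq, of "\<lambda>v. v (k + j)"] by (simp add: parity_word_parity)
      qed (use w w' in \<open>simp add: words_def\<close>)
    qed
  qed
  thus ?thesis
    using assms by (simp add: dual_code_systematic card_image card_words)
qed

lemma weight_parity_word_ge_2:
  assumes "\<And>j. j < n \<Longrightarrow> \<exists>r<k. A r j \<noteq> 0" and "j0 < n" "w j0 \<noteq> 0"
  shows "2 \<le> weight (k + n) (parity_word k n A w)"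
proof (cases "\<exists>j1<n. j1 \<noteq> j0 \<and> w j1 \<noteq> 0")
  case True
  then obtain j1 where "j1 < n" "j1 \<noteq> j0" "w j1 \<noteq> 0" by blast
  hence "{j0, j1} \<subseteq> {j. j < n \<and> w j \<noteq> 0}" using assms by auto
  hence "card {j0, j1} \<le> card {j. j < n \<and> w j \<noteq> 0}" by (intro card_mono) auto
  hence "2 \<le> card {j. j < n \<and> w j \<noteq> 0}" using \<open>j1 \<noteq> j0\<close> by simp
  thus ?thesis by (simp add: weight_parity_word)
next
  case False
  obtain r where r: "r < k" "A r j0 \<noteq> 0" using assms by blast
  have "(\<Sum>j<n. A r j * w j) = (\<Sum>j<n. if j = j0 then A r j0 * w j0 else 0)"
    by (rule sum.cong) (use False in auto)
  also have "\<dots> = A r j0 * w j0" using assms(2) by simp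
  finally have "r \<in> {r. r < k \<and> (\<Sum>j<n. A r j * w j) \<noteq> 0}" using r assms(3) by simp
  hence "card {r. r < k \<and> (\<Sum>j<n. A r j * w j) \<noteq> 0} > 0"
    by (auto simp: card_gt_0_iff)
  moreover have "j0 \<in> {j. j < n \<and> w j \<noteq> 0}" using assms by simp
  hence "card {j. j < n \<and> w j \<noteq> 0} > 0"
    by (auto simp: card_gt_0_iff)
  ultimately show ?thesis by (simp add: weight_parity_word)
qed

end

section \<open>The field \<open>F\<close> with \<open>q\<^sup>m\<close> elements over its subfield \<open>K\<close> with \<open>q\<close> elements\<close>

locale odd_field_extension =
  fixes p e q m :: nat and \<alpha> :: "'a :: {finite, field}"
  assumes prime_p: "prime p" and odd_p: "odd p" and e_pos: "e \<ge> 1" and q_def: "q = p ^ e"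
    and card_field: "card (UNIV :: 'a set) = q ^ m"
    and primitive: "\<forall>y :: 'a. y \<noteq> 0 \<longrightarrow> (\<exists>k :: nat. y = \<alpha> ^ k)"
begin

abbreviation K :: "'a set" where "K \<equiv> subfield_Fq q"
abbreviation Tr :: "'a \<Rightarrow> 'a" where "Tr \<equiv> trace q m"

lemma CHAR_eq: "CHAR('a) = p"
  using CHAR_eq_of_card_prime_power[OF prime_p, of "e * m"] card_field q_def
  by (simp add: power_mult)

lemma prime_CHAR: "prime CHAR('a)"
  by (simp add: CHAR_eq prime_p)

lemma q_CHAR_power: "q = CHAR('a) ^ e"
  by (simp add: CHAR_eq q_def)

lemma p_ge_3: "p \<ge> 3"
  using prime_ge_2_nat[OF prime_p] odd_p by presburger

lemma q_ge_3: "q \<ge> 3"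
proof -
  have "p ^ 1 \<le> p ^ e" using e_pos p_ge_3 by (intro power_increasing) auto
  thus ?thesis using p_ge_3 q_def by simp
qed

lemma odd_q: "odd q"
  using odd_p q_def by simp

lemma two_neq_zero: "(2 :: 'a) \<noteq> 0"
proof
  assume "(2 :: 'a) = 0"
  hence "p dvd 2" using of_nat_eq_0_iff_char_dvd[of 2, where 'a = 'a] CHAR_eq by simp
  thus False using p_ge_3 by (auto dest: dvd_imp_le)
qed

lemma four_neq_zero: "(4 :: 'a) \<noteq> 0"
proof -
  have "(2 :: 'a) * 2 \<noteq> 0" by (rule no_zero_divisors[OF two_neq_zero two_neq_zero])
  thus ?thesis by simp
qed

lemma m_pos: "m > 0"
proof (rule ccontr)
  assume "\<not> m > 0"
  hence "card (UNIV :: 'a set) = 1" using card_field by simp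
  moreover have "card {0, 1 :: 'a} \<le> card (UNIV :: 'a set)" by (rule card_mono) simp_all
  ultimately show False by simp
qed

lemma power_qm_eq_self: "x ^ (q ^ m) = (x :: 'a)"
  using power_card_eq_self[of x] card_field by simp

lemma mem_K_iff: "x \<in> K \<longleftrightarrow> x ^ q = x"
  by (simp add: subfield_Fq_def)

lemma finite_subfield_K: "finite_subfield K"
proof
  have add: "(x + y) ^ q = x ^ q + y ^ q" for x y :: 'a
    using add_power_CHAR_power[OF prime_CHAR q_CHAR_power, of x y 1] by simp
  have zero: "(0 :: 'a) ^ q = 0" using q_ge_3 by (simp add: zero_power)
  show "0 \<in> K" using zero by (simp add: mem_K_iff)
  show "1 \<in> K" by (simp add: mem_K_iff)
  show "x + y \<in> K" if "x \<in> K" "y \<in> K" for x y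
    using that by (simp add: mem_K_iff add)
  show "- x \<in> K" if "x \<in> K" for x
  proof -
    have "x ^ q + (- x) ^ q = 0" using add[of x "- x"] zero by simp
    thus ?thesis using that by (simp add: mem_K_iff eq_neg_iff_add_eq_0 add.commute)
  qed
  show "x * y \<in> K" if "x \<in> K" "y \<in> K" for x y
    using that by (simp add: mem_K_iff power_mult_distrib)
  show "inverse x \<in> K" if "x \<in> K" for x
    using that by (simp add: mem_K_iff power_inverse)
qed simp

sublocale K: finite_subfield K
  by (rule finite_subfield_K)

lemma alpha_nonzero: "\<alpha> \<noteq> 0"
proof
  assume "\<alpha> = 0"
  obtain k where k: "(- 1 :: 'a) = \<alpha> ^ k" using primitive by force
  show False
  proof (cases k)
    case 0
    hence "(1 :: 'a) + 1 = 0" using k by (metis add.right_inverse power_0)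
    thus False using two_neq_zero by (simp add: one_add_one)
  qed (use k \<open>\<alpha> = 0\<close> in simp)
qed

lemma alpha_power_order: "\<alpha> ^ (q ^ m - 1) = 1"
proof -
  have "q ^ m > 0" using q_ge_3 by simp
  hence "\<alpha> * \<alpha> ^ (q ^ m - 1) = \<alpha> ^ (q ^ m)" by (simp flip: power_Suc)
  also have "\<dots> = \<alpha> * 1" by (simp add: power_qm_eq_self)
  finally show ?thesis using alpha_nonzero by simp
qed

lemma alpha_power_mod: "\<alpha> ^ k = \<alpha> ^ (k mod (q ^ m - 1))"
proof -
  have "\<alpha> ^ k = \<alpha> ^ ((q ^ m - 1) * (k div (q ^ m - 1)) + k mod (q ^ m - 1))" by simp
  also have "\<dots> = (\<alpha> ^ (q ^ m - 1)) ^ (k div (q ^ m - 1)) * \<alpha> ^ (k mod (q ^ m - 1))"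
    by (simp only: power_add power_mult)
  finally show ?thesis using alpha_power_order by simp
qed

lemma qm_minus_1_pos: "q ^ m - 1 > 0"
proof -
  have "q ^ 1 \<le> q ^ m" using m_pos q_ge_3 by (intro power_increasing) auto
  thus ?thesis using q_ge_3 by simp
qed

lemma alpha_power_eq_iff: "\<alpha> ^ i = \<alpha> ^ j \<longleftrightarrow> i mod (q ^ m - 1) = j mod (q ^ m - 1)"
proof -
  let ?P = "q ^ m - 1"
  have "?P > 0" by (rule qm_minus_1_pos)
  have "(\<lambda>k. \<alpha> ^ k) ` {..<?P} = - {0}"
  proof
    show "(\<lambda>k. \<alpha> ^ k) ` {..<?P} \<subseteq> - {0}" using alpha_nonzero by auto
    show "- {0} \<subseteq> (\<lambda>k. \<alpha> ^ k) ` {..<?P}"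
    proof
      fix y :: 'a assume "y \<in> - {0}"
      then obtain k where "y = \<alpha> ^ k" using primitive by auto
      hence "y = \<alpha> ^ (k mod ?P)" by (simp only: alpha_power_mod[of k])
      moreover have "k mod ?P < ?P" using \<open>?P > 0\<close> by simp
      ultimately show "y \<in> (\<lambda>k. \<alpha> ^ k) ` {..<?P}" by blast
    qed
  qed
  moreover have "card (- {0 :: 'a}) = ?P"
    using card_field by (simp add: Compl_eq_Diff_UNIV card_Diff_singleton)
  ultimately have inj: "inj_on (\<lambda>k. \<alpha> ^ k) {..<?P}"
    by (intro eq_card_imp_inj_on) simp_all
  have "\<alpha> ^ i = \<alpha> ^ j \<longleftrightarrow> \<alpha> ^ (i mod ?P) = \<alpha> ^ (j mod ?P)"
    by (simp only: alpha_power_mod[of i] alpha_power_mod[of j])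
  also have "\<dots> \<longleftrightarrow> i mod ?P = j mod ?P"
    using inj_onD[OF inj] \<open>?P > 0\<close> by auto
  finally show ?thesis .
qed

lemma alpha_power_eq_1_iff: "\<alpha> ^ i = 1 \<longleftrightarrow> (q ^ m - 1) dvd i"
  using alpha_power_eq_iff[of i 0] by (simp add: dvd_eq_mod_eq_0)

text \<open>The exponent \<open>(q\<^sup>m - 1) / (q - 1)\<close> of the norm map from \<open>F\<close> to \<open>K\<close>.\<close>

definition norm_exponent :: nat where
  "norm_exponent = (\<Sum>i<m. q ^ i)"

lemma norm_exponent_mult: "q ^ m - 1 = norm_exponent * (q - 1)"
proof -
  have "int (q ^ m - 1) = int q ^ m - 1" using q_ge_3 by (simp add: of_nat_diff)
  also have "\<dots> = (int q - 1) * (\<Sum>i<m. int q ^ i)" by (rule power_diff_1_eq)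
  also have "\<dots> = int (norm_exponent * (q - 1))"
    using q_ge_3 by (simp add: norm_exponent_def of_nat_diff)
  finally show ?thesis by (simp only: of_nat_eq_iff)
qed

lemma alpha_power_mem_K_iff: "\<alpha> ^ j \<in> K \<longleftrightarrow> norm_exponent dvd j"
proof -
  have "j * q = j + j * (q - 1)" using q_ge_3 by (cases q) (simp_all add: algebra_simps)
  hence "(\<alpha> ^ j) ^ q = \<alpha> ^ j * \<alpha> ^ (j * (q - 1))"
    by (simp only: power_mult[symmetric] power_add)
  hence "\<alpha> ^ j \<in> K \<longleftrightarrow> \<alpha> ^ (j * (q - 1)) = 1"
    using alpha_nonzero by (simp add: mem_K_iff)
  also have "\<dots> \<longleftrightarrow> norm_exponent * (q - 1) dvd j * (q - 1)"
    by (simp only: alpha_power_eq_1_iff norm_exponent_mult)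
  also have "\<dots> \<longleftrightarrow> norm_exponent dvd j"
    using q_ge_3 by simp
  finally show ?thesis .
qed

lemma K_eq_powers: "K = insert 0 ((\<lambda>k. \<alpha> ^ (norm_exponent * k)) ` {..<q - 1})"
proof (intro equalityI subsetI)
  fix x assume "x \<in> K"
  show "x \<in> insert 0 ((\<lambda>k. \<alpha> ^ (norm_exponent * k)) ` {..<q - 1})"
  proof (cases "x = 0")
    case False
    then obtain j where j: "x = \<alpha> ^ j" using primitive by auto
    hence "x = \<alpha> ^ (j mod (q ^ m - 1))" by (simp only: alpha_power_mod[of j])
    moreover have "norm_exponent dvd j mod (q ^ m - 1)"
      using \<open>x \<in> K\<close> calculation by (simp add: alpha_power_mem_K_iff)
    then obtain k where k: "j mod (q ^ m - 1) = norm_exponent * k" by blast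
    moreover have "k < q - 1"
    proof (rule ccontr)
      assume "\<not> k < q - 1"
      hence "norm_exponent * (q - 1) \<le> norm_exponent * k" by simp
      moreover have "j mod (q ^ m - 1) < q ^ m - 1" using qm_minus_1_pos by simp
      ultimately show False using k norm_exponent_mult by simp
    qed
    ultimately have "x = \<alpha> ^ (norm_exponent * k)" "k < q - 1" by simp_all
    thus ?thesis by blast
  qed simp
qed (auto simp: alpha_power_mem_K_iff)

lemma norm_exponent_pos: "norm_exponent > 0"
  using qm_minus_1_pos norm_exponent_mult by (metis gr0I mult_0)

lemma card_K: "card K = q"
proof -
  have "inj_on (\<lambda>k. \<alpha> ^ (norm_exponent * k)) {..<q - 1}"
  proof (rule inj_onI)
    fix i j assume "i \<in> {..<q - 1}" "j \<in> {..<q - 1}"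
      and eq: "\<alpha> ^ (norm_exponent * i) = \<alpha> ^ (norm_exponent * j)"
    hence "norm_exponent * i < q ^ m - 1" "norm_exponent * j < q ^ m - 1"
      using norm_exponent_mult norm_exponent_pos by simp_all
    with eq have "norm_exponent * i = norm_exponent * j" by (simp add: alpha_power_eq_iff)
    thus "i = j" using norm_exponent_pos by simp
  qed
  moreover have "0 \<notin> (\<lambda>k. \<alpha> ^ (norm_exponent * k)) ` {..<q - 1}"
    using alpha_nonzero by auto
  ultimately show ?thesis
    using q_ge_3 by (simp add: K_eq_powers card_image)
qed

lemma Tr_add: "Tr (x + y) = Tr x + Tr y"
  by (rule trace_add[OF prime_CHAR q_CHAR_power])

lemma Tr_0: "Tr 0 = 0"
  using q_ge_3 by (simp add: trace_def zero_power)

lemma Tr_sum: "Tr (sum f A) = (\<Sum>i\<in>A. Tr (f i))"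
  by (rule trace_sum[OF prime_CHAR q_CHAR_power])

lemma Tr_scale: "u \<in> K \<Longrightarrow> Tr (u * x) = u * Tr x"
  by (simp add: trace_scale mem_K_iff)

lemma Tr_mem_K: "Tr x \<in> K"
  using trace_power_eq_self[OF prime_CHAR q_CHAR_power power_qm_eq_self] by (simp add: mem_K_iff)

lemma exists_Tr_nonzero: "\<exists>x. Tr x \<noteq> 0"
proof -
  have "card {x :: 'a. Tr x = 0} \<le> q ^ (m - 1)"
    using q_ge_3 m_pos by (intro card_trace_eq_0_le) auto
  also have "\<dots> < card (UNIV :: 'a set)"
    using q_ge_3 m_pos card_field by (simp add: power_strict_increasing)
  finally have "{x :: 'a. Tr x = 0} \<noteq> UNIV" by auto
  thus ?thesis by auto
qed

text \<open>On \<open>K\<close>, \<open>trace p e\<close> is the absolute trace to the prime field, so \<open>\<chi>\<close> is the canonical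
  additive character of \<open>K\<close> and \<open>\<psi>\<close> is its lift to \<open>F\<close>.\<close>

definition \<chi> :: "'a \<Rightarrow> complex" where
  "\<chi> u = prime_field_character (trace p e u)"

definition \<psi> :: "'a \<Rightarrow> complex" where
  "\<psi> x = \<chi> (Tr x)"

lemma absolute_trace_mem_prime_field:
  assumes "u \<in> K"
  shows "trace p e u ^ CHAR('a) = trace p e u"
proof -
  have "u ^ (p ^ e) = u" using assms by (simp add: mem_K_iff flip: q_def)
  thus ?thesis
    using trace_power_eq_self[OF prime_CHAR, where Q = p and k = 1 and M = e and x = u]
    by (simp add: CHAR_eq)
qed

lemma absolute_trace_add: "trace p e (x + y) = trace p e x + trace p e (y :: 'a)"
  by (rule trace_add[OF prime_CHAR, where k = 1]) (simp add: CHAR_eq)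

lemma chi_character: "nontrivial_additive_character K \<chi>"
proof (intro nontrivial_additive_character.intro nontrivial_additive_character_axioms.intro)
  show "finite_subfield K" by (rule finite_subfield_K)
  show "\<chi> (x + y) = \<chi> x * \<chi> y" if "x \<in> K" "y \<in> K" for x y
    using that by (simp add: \<chi>_def absolute_trace_add prime_field_character_add[OF prime_CHAR]
        absolute_trace_mem_prime_field)
  show "norm (\<chi> x) = 1" for x by (simp add: \<chi>_def)
  have "card {u :: 'a. trace p e u = 0} \<le> p ^ (e - 1)"
    using p_ge_3 e_pos by (intro card_trace_eq_0_le) auto
  also have "\<dots> < card K"
    unfolding card_K using p_ge_3 e_pos by (simp add: q_def power_strict_increasing)
  finally obtain u where "u \<in> K" "trace p e u \<noteq> 0"
    by (metis (mono_tags, lifting) card_mono finite mem_Collect_eq not_le subsetI)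
  thus "\<exists>u\<in>K. \<chi> u \<noteq> 1"
    by (auto simp: \<chi>_def prime_field_character_eq_1_iff[OF prime_CHAR] absolute_trace_mem_prime_field)
qed

sublocale chi: nontrivial_additive_character K \<chi>
  by (rule chi_character)

lemma psi_scale: "u \<in> K \<Longrightarrow> \<psi> (u * x) = \<chi> (u * Tr x)"
  by (simp add: \<psi>_def Tr_scale)

lemma psi_character: "nontrivial_additive_character UNIV \<psi>"
proof (intro nontrivial_additive_character.intro nontrivial_additive_character_axioms.intro)
  show "finite_subfield (UNIV :: 'a set)" by unfold_locales simp_all
  show "\<psi> (x + y) = \<psi> x * \<psi> y" for x y
    by (simp add: \<psi>_def Tr_add chi.character_add Tr_mem_K)
  show "norm (\<psi> x) = 1" for x by (simp add: \<psi>_def chi.norm_character Tr_mem_K)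
  obtain u where u: "u \<in> K" "\<chi> u \<noteq> 1" using chi.nontrivial by blast
  obtain x where x: "Tr x \<noteq> 0" using exists_Tr_nonzero by blast
  have "\<psi> ((u / Tr x) * x) = \<chi> ((u / Tr x) * Tr x)"
    using u Tr_mem_K[of x] by (intro psi_scale K.divide_mem)
  hence "\<psi> ((u / Tr x) * x) = \<chi> u" using x by simp
  thus "\<exists>y\<in>UNIV. \<psi> y \<noteq> 1" using u by (intro bexI[of _ "(u / Tr x) * x"]) simp_all
qed

sublocale psi: nontrivial_additive_character UNIV \<psi>
  by (rule psi_character)

lemma sum_psi_scale_K: "(\<Sum>u\<in>K. \<psi> (u * x)) = (if Tr x = 0 then of_nat q else 0)"
  using chi.sum_character_mult[OF Tr_mem_K[of x]]
  by (simp add: psi_scale mult.commute card_K)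

lemma card_trace_kernel: "card {x :: 'a. Tr x = 0} = q ^ (m - 1)"
proof -
  have "of_nat (card {x :: 'a. Tr x = 0}) * of_nat q = (\<Sum>x\<in>UNIV. \<Sum>u\<in>K. \<psi> (u * x))"
    by (simp add: sum_psi_scale_K sum.inter_filter[symmetric])
  also have "\<dots> = (\<Sum>u\<in>K. \<Sum>x\<in>UNIV. \<psi> (u * x))"
    by (rule sum.swap)
  also have "\<dots> = (\<Sum>u\<in>K. if u = 0 then of_nat (q ^ m) else 0)"
    by (simp add: psi.sum_character_mult card_field)
  also have "\<dots> = of_nat (q ^ (m - 1) * q)"
    using m_pos by (simp add: power_Suc2[symmetric])
  finally have "card {x :: 'a. Tr x = 0} * q = q ^ (m - 1) * q"
    by (simp only: of_nat_mult[symmetric] of_nat_eq_iff)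
  thus ?thesis using q_ge_3 by simp
qed

definition gauss_sum :: "'a \<Rightarrow> complex" where
  "gauss_sum u = (\<Sum>x\<in>UNIV. \<psi> (u * x\<^sup>2))"

definition subfield_gauss_sum :: "'a \<Rightarrow> 'a \<Rightarrow> complex" where
  "subfield_gauss_sum a c = (\<Sum>v\<in>K. \<chi> (a * v\<^sup>2 + c * v))"

lemma norm_gauss_sum_sq: "u \<noteq> 0 \<Longrightarrow> (norm (gauss_sum u))\<^sup>2 = q ^ m"
  using psi.norm_quadratic_character_sum_sq[OF two_neq_zero, of u 0] card_field
  by (simp add: gauss_sum_def)

lemma norm_subfield_gauss_sum_sq:
  "a \<in> K \<Longrightarrow> a \<noteq> 0 \<Longrightarrow> c \<in> K \<Longrightarrow> (norm (subfield_gauss_sum a c))\<^sup>2 = q"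
  using chi.norm_quadratic_character_sum_sq[OF two_neq_zero, of a c] card_K
  by (simp add: subfield_gauss_sum_def)

definition span_powers :: "nat \<Rightarrow> 'a set" where
  "span_powers k = (\<lambda>c. \<Sum>i<k. c i * \<alpha> ^ i) ` words q k"

lemma span_powers_memI:
  assumes "\<And>i. i < k \<Longrightarrow> c i \<in> K"
  shows "(\<Sum>i<k. c i * \<alpha> ^ i) \<in> span_powers k"
proof -
  define c' where "c' i = (if i < k then c i else 0)" for i
  have "c' \<in> words q k" using assms by (simp add: c'_def words_def)
  moreover have "(\<Sum>i<k. c i * \<alpha> ^ i) = (\<Sum>i<k. c' i * \<alpha> ^ i)"
    by (rule sum.cong) (simp_all add: c'_def)
  ultimately show ?thesis unfolding span_powers_def by blast
qed

lemma span_powers_memE: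
  assumes "v \<in> span_powers k"
  obtains c where "\<And>i. i < k \<Longrightarrow> c i \<in> K" "v = (\<Sum>i<k. c i * \<alpha> ^ i)"
  using assms by (auto simp: span_powers_def words_def)

lemma span_powers_add:
  assumes "v \<in> span_powers k" "w \<in> span_powers k"
  shows "v + w \<in> span_powers k"
proof -
  obtain c where "\<And>i. i < k \<Longrightarrow> c i \<in> K" "v = (\<Sum>i<k. c i * \<alpha> ^ i)"
    using assms(1) span_powers_memE by blast
  moreover obtain d where "\<And>i. i < k \<Longrightarrow> d i \<in> K" "w = (\<Sum>i<k. d i * \<alpha> ^ i)"
    using assms(2) span_powers_memE by blast
  moreover have "(\<Sum>i<k. c i * \<alpha> ^ i) + (\<Sum>i<k. d i * \<alpha> ^ i) = (\<Sum>i<k. (c i + d i) * \<alpha> ^ i)"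
    by (simp add: distrib_right sum.distrib)
  ultimately show ?thesis by (simp add: span_powers_memI K.add_mem)
qed

lemma span_powers_scale:
  assumes "v \<in> span_powers k" "s \<in> K"
  shows "s * v \<in> span_powers k"
proof -
  obtain c where "\<And>i. i < k \<Longrightarrow> c i \<in> K" "v = (\<Sum>i<k. c i * \<alpha> ^ i)"
    using assms(1) span_powers_memE by blast
  moreover have "s * (\<Sum>i<k. c i * \<alpha> ^ i) = (\<Sum>i<k. (s * c i) * \<alpha> ^ i)"
    by (simp add: sum_distrib_left mult.assoc)
  ultimately show ?thesis using assms(2) by (simp add: span_powers_memI K.mult_mem)
qed

lemma span_powers_times_alpha:
  assumes "\<alpha> ^ k \<in> span_powers k" and "v \<in> span_powers k"
  shows "\<alpha> * v \<in> span_powers k"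
proof -
  obtain c where c: "\<And>i. i < k \<Longrightarrow> c i \<in> K" "v = (\<Sum>i<k. c i * \<alpha> ^ i)"
    using assms(2) span_powers_memE by blast
  define c' where "c' i = (if i = 0 then 0 else c (i - 1))" for i
  have c'_K: "c' i \<in> K" if "i \<le> k" for i using c(1) that by (simp add: c'_def)
  have "\<alpha> * v = (\<Sum>i<k. c' (Suc i) * \<alpha> ^ Suc i)"
    by (simp add: c c'_def sum_distrib_left mult_ac)
  also have "\<dots> = (\<Sum>i<Suc k. c' i * \<alpha> ^ i)"
    by (simp only: sum.lessThan_Suc_shift) (simp add: c'_def)
  also have "\<dots> = (\<Sum>i<k. c' i * \<alpha> ^ i) + c' k * \<alpha> ^ k"
    by (rule sum.lessThan_Suc)
  finally show ?thesis
    using c'_K span_powers_scale[OF assms(1) c'_K[of k]]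
    by (simp add: span_powers_add span_powers_memI)
qed

lemma span_powers_eq_UNIV:
  assumes "k > 0" and "\<alpha> ^ k \<in> span_powers k"
  shows "span_powers k = UNIV"
proof -
  have "(\<Sum>i<k. (if i = 0 then 1 else 0) * \<alpha> ^ i) = (\<Sum>i<k. if i = 0 then 1 else 0)"
    by (rule sum.cong) auto
  hence "1 \<in> span_powers k"
    using span_powers_memI[of k "\<lambda>i. if i = 0 then 1 else 0"] assms(1) by simp
  hence powers: "\<alpha> ^ j \<in> span_powers k" for j
    by (induction j) (simp_all add: span_powers_times_alpha assms(2))
  have "0 \<in> span_powers k" using span_powers_scale[OF \<open>1 \<in> span_powers k\<close>, of 0] by simp
  have "y \<in> span_powers k" for y
    using primitive powers \<open>0 \<in> span_powers k\<close> by (cases "y = 0") auto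
  thus ?thesis by auto
qed

lemma card_span_powers_le: "card (span_powers k) \<le> q ^ k"
proof -
  have card_eq: "card (words q k :: (nat \<Rightarrow> 'a) set) = q ^ k"
    by (simp only: card_words card_K)
  have "finite (words q k :: (nat \<Rightarrow> 'a) set)"
    by (rule card_ge_0_finite) (use card_eq q_ge_3 in simp)
  hence "card (span_powers k) \<le> card (words q k :: (nat \<Rightarrow> 'a) set)"
    unfolding span_powers_def by (rule card_image_le)
  thus ?thesis using card_eq by simp
qed

lemma alpha_power_not_in_span_powers:
  assumes "0 < k" "k < m"
  shows "\<alpha> ^ k \<notin> span_powers k"
proof
  assume "\<alpha> ^ k \<in> span_powers k"
  hence "card (UNIV :: 'a set) \<le> q ^ k"
    using span_powers_eq_UNIV[OF assms(1)] card_span_powers_le[of k] by simp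
  hence "q ^ m \<le> q ^ k" by (simp add: card_field)
  thus False using assms q_ge_3 by (simp add: power_strict_increasing)
qed

lemma powers_linear_independent:
  assumes "\<And>i. i < m \<Longrightarrow> c i \<in> K" and "(\<Sum>i<m. c i * \<alpha> ^ i) = 0" and "i < m"
  shows "c i = 0"
proof (rule ccontr)
  assume "c i \<noteq> 0"
  define I where "I = {i. i < m \<and> c i \<noteq> 0}"
  define k where "k = Max I"
  have "finite I" "I \<noteq> {}" using \<open>c i \<noteq> 0\<close> assms(3) by (auto simp: I_def)
  hence "k \<in> I" "\<And>j. j \<in> I \<Longrightarrow> j \<le> k" by (simp_all add: k_def)
  hence k: "k < m" "c k \<noteq> 0" "\<And>j. k < j \<Longrightarrow> j < m \<Longrightarrow> c j = 0"
    by (auto simp: I_def) (meson not_le)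
  have "(\<Sum>j<m. c j * \<alpha> ^ j) = (\<Sum>j<Suc k. c j * \<alpha> ^ j)"
    using k by (intro sum.mono_neutral_right) auto
  hence top: "c k * \<alpha> ^ k = - (\<Sum>j<k. c j * \<alpha> ^ j)"
    using assms(2) by (simp add: eq_neg_iff_add_eq_0 add.commute)
  have "\<alpha> ^ k = (c k * \<alpha> ^ k) / c k" using k(2) by simp
  also have "\<dots> = (- (\<Sum>j<k. c j * \<alpha> ^ j)) / c k" by (simp only: top)
  also have "\<dots> = (\<Sum>j<k. (- c j / c k) * \<alpha> ^ j)"
    by (simp add: sum_negf[symmetric] sum_divide_distrib)
  also have "\<dots> \<in> span_powers k"
    using assms(1) k by (intro span_powers_memI) (simp add: K.divide_mem K.uminus_mem)
  finally have "\<alpha> ^ k \<in> span_powers k" .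
  moreover have "k > 0"
  proof (rule ccontr)
    assume "\<not> k > 0"
    thus False using top k(2) by simp
  qed
  ultimately show False using alpha_power_not_in_span_powers k(1) by blast
qed

end

section \<open>Points of the quadric \<open>D\<close> on affine hyperplanes\<close>

context odd_field_extension
begin

lemma alpha_power_square_iff: "(\<exists>z. \<alpha> ^ k = z\<^sup>2) \<longleftrightarrow> even k"
proof
  assume "\<exists>z. \<alpha> ^ k = z\<^sup>2"
  then obtain z where z: "\<alpha> ^ k = z\<^sup>2" by blast
  hence "z \<noteq> 0" using alpha_nonzero by auto
  then obtain j where "z = \<alpha> ^ j" using primitive by blast
  hence "\<alpha> ^ k = \<alpha> ^ (2 * j)" using z by (simp add: power_mult[symmetric] mult.commute)
  hence "k mod (q ^ m - 1) mod 2 = (2 * j) mod (q ^ m - 1) mod 2"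
    by (simp add: alpha_power_eq_iff)
  moreover have "2 dvd q ^ m - 1" using odd_q qm_minus_1_pos by simp
  ultimately have "k mod 2 = (2 * j) mod 2" by (simp add: mod_mod_cancel)
  thus "even k" by presburger
next
  assume "even k"
  thus "\<exists>z. \<alpha> ^ k = z\<^sup>2" by (intro exI[of _ "\<alpha> ^ (k div 2)"]) (simp flip: power_mult)
qed

lemma card_square_roots:
  "card {x :: 'a. x\<^sup>2 = y} = (if y = 0 then 1 else if \<exists>z. y = z\<^sup>2 then 2 else 0)"
proof (cases "\<exists>z. y = z\<^sup>2")
  case True
  then obtain z where z: "y = z\<^sup>2" by blast
  have roots: "{x. x\<^sup>2 = y} = {z, - z}" unfolding z by (auto simp: power2_eq_iff)
  show ?thesis
  proof (cases "z = 0")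
    case False
    have "z \<noteq> - z"
    proof
      assume "z = - z"
      hence "z + z = 0" by (metis add.left_inverse)
      thus False using False two_neq_zero by (simp flip: mult_2)
    qed
    hence "card {x. x\<^sup>2 = y} = 2" unfolding roots by simp
    moreover have "y \<noteq> 0" using False z by simp
    ultimately show ?thesis using True by simp
  next
    case True
    hence "card {x. x\<^sup>2 = y} = 1" unfolding roots by simp
    thus ?thesis using z True by simp
  qed
next
  case False
  hence "{x. x\<^sup>2 = y} = {}" "y \<noteq> 0\<^sup>2" by auto
  thus ?thesis using False by simp
qed

lemma sum_chi_shift_indicator:
  assumes "s \<in> K" "t \<in> K"
  shows "(\<Sum>v\<in>K. \<chi> (v * (s - t))) = (if s = t then of_nat q else 0)"
  using chi.sum_character_mult[of "s - t"] assms by (simp add: K.diff_mem card_K mult.commute)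

lemma chi_psi_product:
  assumes "u \<in> K" "v \<in> K" "t \<in> K"
  shows "\<psi> (u * x\<^sup>2) * \<chi> (v * (Tr (b * x) - t)) = \<chi> (- (v * t)) * \<psi> (u * x\<^sup>2 + (v * b) * x)"
proof -
  have split: "v * (Tr (b * x) - t) = v * Tr (b * x) + - (v * t)" by (simp add: algebra_simps)
  have "\<chi> (v * (Tr (b * x) - t)) = \<chi> (v * Tr (b * x)) * \<chi> (- (v * t))"
    unfolding split using assms
    by (intro chi.character_add) (simp_all add: Tr_mem_K K.mult_mem K.uminus_mem)
  also have "\<chi> (v * Tr (b * x)) = \<psi> ((v * b) * x)"
    using assms by (simp add: psi_scale mult.assoc)
  finally show ?thesis by (simp add: psi.character_add mult_ac)
qed

lemma quadratic_psi_sum: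
  assumes "u \<in> K" "u \<noteq> 0" "v \<in> K"
  shows "(\<Sum>x\<in>UNIV. \<psi> (u * x\<^sup>2 + (v * b) * x)) = \<chi> (- (Tr (b\<^sup>2) / (4 * u)) * v\<^sup>2) * gauss_sum u"
proof -
  define c where "c = v * b / (2 * u)"
  have "(4 :: 'a) * 4 \<noteq> 0" by (rule no_zero_divisors[OF four_neq_zero four_neq_zero])
  hence "(16 :: 'a) \<noteq> 0" by simp
  have square: "u * x\<^sup>2 + (v * b) * x = u * (x + c)\<^sup>2 + (- (v\<^sup>2 / (4 * u))) * b\<^sup>2" for x
    using assms(2) two_neq_zero four_neq_zero \<open>(16 :: 'a) \<noteq> 0\<close>
    by (simp add: c_def field_simps power2_eq_square)
  define w where "w = (- (v\<^sup>2 / (4 * u))) * b\<^sup>2"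
  have "(\<Sum>x\<in>UNIV. \<psi> (u * x\<^sup>2 + (v * b) * x)) = (\<Sum>x\<in>UNIV. \<psi> (u * (x + c)\<^sup>2) * \<psi> w)"
    by (simp only: square w_def psi.character_add UNIV_I)
  also have "\<dots> = (\<Sum>x\<in>UNIV. \<psi> (u * (x + c)\<^sup>2)) * \<psi> w"
    by (rule sum_distrib_right[symmetric])
  also have "(\<Sum>x\<in>UNIV. \<psi> (u * (x + c)\<^sup>2)) = gauss_sum u"
    unfolding gauss_sum_def by (rule sum.reindex_bij_witness[of _ "\<lambda>x. x - c" "\<lambda>x. x + c"]) auto
  also have "\<psi> w = \<chi> ((- (v\<^sup>2 / (4 * u))) * Tr (b\<^sup>2))"
    unfolding w_def using assms by (intro psi_scale) (simp add: K.closure)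
  also have "(- (v\<^sup>2 / (4 * u))) * Tr (b\<^sup>2) = - (Tr (b\<^sup>2) / (4 * u)) * v\<^sup>2"
    by (simp add: mult.commute)
  finally show ?thesis by (simp only: mult.commute)
qed

lemma card_quadric_hyperplane_character_sum:
  assumes "t \<in> K"
  shows "of_nat (q\<^sup>2 * card {x. Tr (x\<^sup>2) = 0 \<and> Tr (b * x) = t}) =
    (\<Sum>u\<in>K. \<Sum>v\<in>K. \<chi> (- (v * t)) * (\<Sum>x\<in>UNIV. \<psi> (u * x\<^sup>2 + (v * b) * x)))"
proof -
  have "(\<Sum>u\<in>K. \<psi> (u * x\<^sup>2)) * (\<Sum>v\<in>K. \<chi> (v * (Tr (b * x) - t))) =
      (if Tr (x\<^sup>2) = 0 \<and> Tr (b * x) = t then of_nat (q\<^sup>2) else 0)" for x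
    using assms by (simp add: sum_psi_scale_K sum_chi_shift_indicator Tr_mem_K power2_eq_square)
  hence "of_nat (q\<^sup>2 * card {x. Tr (x\<^sup>2) = 0 \<and> Tr (b * x) = t}) =
      (\<Sum>x\<in>UNIV. (\<Sum>u\<in>K. \<psi> (u * x\<^sup>2)) * (\<Sum>v\<in>K. \<chi> (v * (Tr (b * x) - t))))"
    by (simp add: sum_if_eq_card)
  also have "\<dots> = (\<Sum>x\<in>UNIV. \<Sum>u\<in>K. \<Sum>v\<in>K. \<chi> (- (v * t)) * \<psi> (u * x\<^sup>2 + (v * b) * x))"
    unfolding sum_product using assms by (intro sum.cong refl) (simp add: chi_psi_product)
  also have "\<dots> = (\<Sum>u\<in>K. \<Sum>v\<in>K. \<chi> (- (v * t)) * (\<Sum>x\<in>UNIV. \<psi> (u * x\<^sup>2 + (v * b) * x)))"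
    by (subst sum.swap, rule sum.cong[OF refl], subst sum.swap) (simp add: sum_distrib_left)
  finally show ?thesis .
qed

lemma character_sum_eq_gauss_sums:
  assumes "u \<in> K" "u \<noteq> 0" and "t \<in> K"
  shows "(\<Sum>v\<in>K. \<chi> (- (v * t)) * (\<Sum>x\<in>UNIV. \<psi> (u * x\<^sup>2 + (v * b) * x))) =
    gauss_sum u * subfield_gauss_sum (- (Tr (b\<^sup>2) / (4 * u))) (- t)"
proof -
  let ?a = "- (Tr (b\<^sup>2) / (4 * u))"
  have "?a \<in> K" using assms(1) by (simp add: K.closure Tr_mem_K)
  have "\<chi> (- (v * t)) * (\<Sum>x\<in>UNIV. \<psi> (u * x\<^sup>2 + (v * b) * x)) =
      gauss_sum u * \<chi> (?a * v\<^sup>2 + (- t) * v)" if "v \<in> K" for v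
  proof -
    have "?a * v\<^sup>2 \<in> K" "(- t) * v \<in> K"
      by (rule K.mult_mem[OF \<open>?a \<in> K\<close> K.power_mem[OF that]])
        (rule K.mult_mem[OF K.uminus_mem[OF assms(3)] that])
    hence "\<chi> (?a * v\<^sup>2 + (- t) * v) = \<chi> (?a * v\<^sup>2) * \<chi> ((- t) * v)"
      by (rule chi.character_add)
    moreover have "(- t) * v = - (v * t)" by simp
    ultimately have "\<chi> (?a * v\<^sup>2 + (- t) * v) = \<chi> (?a * v\<^sup>2) * \<chi> (- (v * t))"
      by (simp only:)
    moreover have "(\<Sum>x\<in>UNIV. \<psi> (u * x\<^sup>2 + (v * b) * x)) = \<chi> (?a * v\<^sup>2) * gauss_sum u"
      by (rule quadratic_psi_sum[OF assms(1,2) that])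
    ultimately show ?thesis by (simp only: mult_ac)
  qed
  thus ?thesis by (simp add: subfield_gauss_sum_def sum_distrib_left)
qed

lemma card_quadric_hyperplane_formula:
  assumes "b \<noteq> 0" and "t \<in> K"
  shows "of_nat (q\<^sup>2 * card {x. Tr (x\<^sup>2) = 0 \<and> Tr (b * x) = t}) =
    of_nat (q ^ m) + (\<Sum>u\<in>K - {0}. gauss_sum u * subfield_gauss_sum (- (Tr (b\<^sup>2) / (4 * u))) (- t))"
proof -
  let ?S = "\<lambda>u v. \<Sum>x\<in>UNIV. \<psi> (u * x\<^sup>2 + (v * b) * x)"
  have "of_nat (q\<^sup>2 * card {x. Tr (x\<^sup>2) = 0 \<and> Tr (b * x) = t}) =
      (\<Sum>u\<in>K. \<Sum>v\<in>K. \<chi> (- (v * t)) * ?S u v)"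
    by (rule card_quadric_hyperplane_character_sum[OF assms(2)])
  also have "\<dots> = (\<Sum>v\<in>K. \<chi> (- (v * t)) * ?S 0 v) + (\<Sum>u\<in>K - {0}. \<Sum>v\<in>K. \<chi> (- (v * t)) * ?S u v)"
    by (rule sum.remove) simp_all
  also have "(\<Sum>v\<in>K. \<chi> (- (v * t)) * ?S 0 v) = of_nat (q ^ m)"
    using assms(1) by (simp add: psi.sum_character_mult card_field if_distrib[of "(*) _"] cong: if_cong)
  also have "(\<Sum>u\<in>K - {0}. \<Sum>v\<in>K. \<chi> (- (v * t)) * ?S u v) =
      (\<Sum>u\<in>K - {0}. gauss_sum u * subfield_gauss_sum (- (Tr (b\<^sup>2) / (4 * u))) (- t))"
    using assms(2) by (intro sum.cong refl character_sum_eq_gauss_sums) auto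
  finally show ?thesis .
qed

lemma sum_gauss_sum: "(\<Sum>u\<in>K. gauss_sum u) = of_nat (q * card {x :: 'a. Tr (x\<^sup>2) = 0})"
proof -
  have "(\<Sum>u\<in>K. gauss_sum u) = (\<Sum>x\<in>UNIV. \<Sum>u\<in>K. \<psi> (u * x\<^sup>2))"
    unfolding gauss_sum_def by (rule sum.swap)
  also have "\<dots> = of_nat (q * card {x :: 'a. Tr (x\<^sup>2) = 0})"
    by (simp add: sum_psi_scale_K sum.inter_filter[symmetric] mult.commute)
  finally show ?thesis .
qed

end

locale odd_degree_extension = odd_field_extension +
  assumes odd_m: "odd m" and m_ge_3: "m \<ge> 3"
begin

text \<open>This is where the oddness of \<open>m\<close> enters: \<open>\<alpha> ^ norm_exponent\<close> lies in \<open>K\<close> but is not a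
  square in \<open>F\<close>.\<close>

lemma odd_norm_exponent: "odd norm_exponent"
proof -
  have "even (\<Sum>i<k. q ^ i) \<longleftrightarrow> even k" for k
    by (induction k) (simp_all add: odd_q)
  thus ?thesis using odd_m by (simp add: norm_exponent_def)
qed

lemma nonsquare_mem_K: "\<alpha> ^ norm_exponent \<in> K"
  by (simp add: alpha_power_mem_K_iff)

lemma square_iff_not_nonsquare_multiple:
  assumes "y \<noteq> 0"
  shows "(\<exists>w. y = \<alpha> ^ norm_exponent * w\<^sup>2) \<longleftrightarrow> \<not> (\<exists>z. y = z\<^sup>2)"
proof
  assume "\<exists>w. y = \<alpha> ^ norm_exponent * w\<^sup>2"
  then obtain w where w: "y = \<alpha> ^ norm_exponent * w\<^sup>2" by blast
  hence "w \<noteq> 0" using assms by auto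
  show "\<not> (\<exists>z. y = z\<^sup>2)"
  proof
    assume "\<exists>z. y = z\<^sup>2"
    then obtain z where "y = z\<^sup>2" by blast
    hence "\<alpha> ^ norm_exponent = (z / w)\<^sup>2"
      using w \<open>w \<noteq> 0\<close> by (simp add: power_divide eq_divide_eq)
    thus False using alpha_power_square_iff odd_norm_exponent by blast
  qed
next
  assume not_square: "\<not> (\<exists>z. y = z\<^sup>2)"
  obtain k where k: "y = \<alpha> ^ k" using primitive assms by blast
  hence "odd k" using not_square alpha_power_square_iff by blast
  let ?P = "q ^ m - 1"
  have "norm_exponent * 1 \<le> norm_exponent * (q - 1)" using q_ge_3 by (intro mult_le_mono2) simp
  hence "norm_exponent \<le> ?P" unfolding norm_exponent_mult by (simp only: mult_1_right)
  moreover have "even ?P" using odd_q qm_minus_1_pos by simp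
  ultimately have "even (k + ?P - norm_exponent)"
    using \<open>odd k\<close> odd_norm_exponent by simp
  hence "\<alpha> ^ norm_exponent * (\<alpha> ^ ((k + ?P - norm_exponent) div 2))\<^sup>2 = \<alpha> ^ (norm_exponent + (k + ?P - norm_exponent))"
    by (simp add: power_add flip: power_mult)
  also have "\<dots> = \<alpha> ^ k * \<alpha> ^ ?P"
    using \<open>norm_exponent \<le> ?P\<close> by (simp add: power_add)
  also have "\<dots> = y" using k alpha_power_order by simp
  finally show "\<exists>w. y = \<alpha> ^ norm_exponent * w\<^sup>2" by metis
qed

lemma card_square_fibres:
  "card {x :: 'a. x\<^sup>2 = y} + card {x. \<alpha> ^ norm_exponent * x\<^sup>2 = y} = 2"
proof -
  let ?c = "\<alpha> ^ norm_exponent"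
  have "?c \<noteq> 0" using alpha_nonzero by simp
  hence "{x. ?c * x\<^sup>2 = y} = {x. x\<^sup>2 = y / ?c}" by (auto simp: eq_divide_eq mult.commute)
  moreover have "(\<exists>z. y / ?c = z\<^sup>2) \<longleftrightarrow> (\<exists>w. y = ?c * w\<^sup>2)"
    using \<open>?c \<noteq> 0\<close> by (simp add: divide_eq_eq mult.commute)
  ultimately show ?thesis
    using square_iff_not_nonsquare_multiple[of y] \<open>?c \<noteq> 0\<close> by (simp add: card_square_roots)
qed

lemma card_quadric: "card {x :: 'a. Tr (x\<^sup>2) = 0} = q ^ (m - 1)"
proof -
  let ?c = "\<alpha> ^ norm_exponent" and ?H = "{y :: 'a. Tr y = 0}"
  have "finite ?H" by simp
  hence "card {x. x\<^sup>2 \<in> ?H} + card {x. ?c * x\<^sup>2 \<in> ?H} =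
      (\<Sum>y\<in>?H. card {x. x\<^sup>2 = y} + card {x. ?c * x\<^sup>2 = y})"
    by (simp only: card_vimage_eq_sum sum.distrib)
  also have "\<dots> = 2 * card ?H"
    by (simp only: card_square_fibres) simp
  finally have "card {x. x\<^sup>2 \<in> ?H} + card {x. ?c * x\<^sup>2 \<in> ?H} = 2 * card ?H" .
  moreover have "{x. ?c * x\<^sup>2 \<in> ?H} = {x. x\<^sup>2 \<in> ?H}"
    using nonsquare_mem_K alpha_nonzero by (simp add: Tr_scale)
  ultimately show ?thesis using card_trace_kernel by simp
qed

lemma sum_gauss_sum_nonzero: "(\<Sum>u\<in>K - {0}. gauss_sum u) = 0"
proof -
  have "gauss_sum 0 + (\<Sum>u\<in>K - {0}. gauss_sum u) = (\<Sum>u\<in>K. gauss_sum u)"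
    by (rule sum.remove[symmetric]) simp_all
  also have "\<dots> = of_nat (q * q ^ (m - 1))"
    by (simp only: sum_gauss_sum card_quadric)
  also have "q * q ^ (m - 1) = q ^ m"
    using m_pos by (simp flip: power_Suc)
  also have "gauss_sum 0 = of_nat (q ^ m)"
    by (simp add: gauss_sum_def card_field)
  finally show ?thesis by simp
qed

lemma norm_gauss_sum_product:
  assumes "Tr (b\<^sup>2) \<noteq> 0" and "u \<in> K" "u \<noteq> 0" and "t \<in> K"
  shows "norm (gauss_sum u * subfield_gauss_sum (- (Tr (b\<^sup>2) / (4 * u))) (- t)) = real q ^ ((m + 1) div 2)"
proof -
  let ?a = "- (Tr (b\<^sup>2) / (4 * u))"
  have "?a \<in> K" "?a \<noteq> 0"
    using assms four_neq_zero by (simp_all add: K.closure Tr_mem_K)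
  hence "(norm (gauss_sum u * subfield_gauss_sum ?a (- t)))\<^sup>2 = real q ^ m * real q"
    using assms by (simp add: norm_mult power_mult_distrib norm_gauss_sum_sq
        norm_subfield_gauss_sum_sq K.uminus_mem)
  also have "\<dots> = real q ^ (((m + 1) div 2) * 2)"
  proof -
    have "((m + 1) div 2) * 2 = Suc m" using odd_m by presburger
    thus ?thesis by simp
  qed
  also have "\<dots> = (real q ^ ((m + 1) div 2))\<^sup>2"
    by (rule power_mult)
  finally show ?thesis by (rule power2_eq_imp_eq) simp_all
qed

lemma norm_gauss_sum_error_le:
  assumes "t \<in> K"
  shows "norm (\<Sum>u\<in>K - {0}. gauss_sum u * subfield_gauss_sum (- (Tr (b\<^sup>2) / (4 * u))) (- t))
    \<le> real (q - 1) * real q ^ ((m + 1) div 2)"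
proof (cases "Tr (b\<^sup>2) = 0")
  case False
  have "norm (\<Sum>u\<in>K - {0}. gauss_sum u * subfield_gauss_sum (- (Tr (b\<^sup>2) / (4 * u))) (- t))
      \<le> (\<Sum>u\<in>K - {0}. norm (gauss_sum u * subfield_gauss_sum (- (Tr (b\<^sup>2) / (4 * u))) (- t)))"
    by (rule norm_sum)
  also have "\<dots> = (\<Sum>u\<in>K - {0}. real q ^ ((m + 1) div 2))"
    using False assms by (intro sum.cong refl) (simp add: norm_gauss_sum_product)
  also have "\<dots> = real (q - 1) * real q ^ ((m + 1) div 2)"
    by (simp add: card_K card_Diff_singleton)
  finally show ?thesis .
next
  case True
  have "subfield_gauss_sum 0 (- t) = (if t = 0 then of_nat q else 0)"
    using chi.sum_character_mult[of "- t"] assms by (simp add: subfield_gauss_sum_def card_K K.uminus_mem)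
  thus ?thesis
    using True by (simp add: sum_distrib_right[symmetric] sum_gauss_sum_nonzero)
qed

lemma card_quadric_hyperplane_le:
  assumes "b \<noteq> 0" and "t \<in> K"
  shows "card {x. Tr (x\<^sup>2) = 0 \<and> Tr (b * x) = t} \<le> q ^ (m - 2) + (q - 1) * q ^ ((m - 3) div 2)"
proof -
  let ?N = "card {x. Tr (x\<^sup>2) = 0 \<and> Tr (b * x) = t}"
  let ?E = "\<Sum>u\<in>K - {0}. gauss_sum u * subfield_gauss_sum (- (Tr (b\<^sup>2) / (4 * u))) (- t)"
  have "real (q\<^sup>2 * ?N) = real (q ^ m) + Re ?E"
    using arg_cong[OF card_quadric_hyperplane_formula[OF assms], of Re] by simp
  also have "\<dots> \<le> real (q ^ m) + real (q - 1) * real q ^ ((m + 1) div 2)"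
    using complex_Re_le_cmod[of ?E] norm_gauss_sum_error_le[OF assms(2), where b = b] by linarith
  also have "\<dots> = real (q\<^sup>2 * (q ^ (m - 2) + (q - 1) * q ^ ((m - 3) div 2)))"
  proof -
    have "m = 2 + (m - 2)" "(m + 1) div 2 = 2 + (m - 3) div 2" using m_ge_3 odd_m by presburger+
    hence "q ^ m = q\<^sup>2 * q ^ (m - 2)" "q ^ ((m + 1) div 2) = q\<^sup>2 * q ^ ((m - 3) div 2)"
      by (metis power_add)+
    hence nat_eq: "q ^ m + (q - 1) * q ^ ((m + 1) div 2) =
        q\<^sup>2 * (q ^ (m - 2) + (q - 1) * q ^ ((m - 3) div 2))"
      by (simp only: distrib_left mult.assoc mult.left_commute)
    have "real (q ^ m) + real (q - 1) * real q ^ ((m + 1) div 2) =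
        real (q ^ m + (q - 1) * q ^ ((m + 1) div 2))" by simp
    thus ?thesis by (simp only: nat_eq)
  qed
  finally have "q\<^sup>2 * ?N \<le> q\<^sup>2 * (q ^ (m - 2) + (q - 1) * q ^ ((m - 3) div 2))"
    by (simp only: of_nat_le_iff)
  thus ?thesis using q_ge_3 by simp
qed

lemma weight_bound_identity:
  "(q - 1) * q ^ ((m - 3) div 2) * (q ^ ((m - 1) div 2) - 1) + (q ^ (m - 2) + (q - 1) * q ^ ((m - 3) div 2))
    = q ^ (m - 1)"
proof -
  define X Y where "X = q ^ ((m - 3) div 2)" and "Y = q ^ ((m - 1) div 2)"
  have "(m - 3) div 2 + (m - 1) div 2 = m - 2" "m - 1 = Suc (m - 2)" using m_ge_3 odd_m by presburger+
  hence XY: "q ^ (m - 2) = X * Y" "q ^ (m - 1) = q * (X * Y)"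
    by (simp_all add: X_def Y_def flip: power_add)
  obtain Y' q' where "Y = Suc Y'" "q = Suc q'"
    using q_ge_3 by (metis Y_def not0_implies_Suc power_not_zero zero_less_Suc less_le_trans
        zero_less_numeral neq0_conv)
  thus ?thesis unfolding XY X_def[symmetric] Y_def[symmetric] by (simp add: algebra_simps)
qed

lemma card_quadric_off_hyperplane_ge:
  assumes "b \<noteq> 0" and "c \<in> K"
  shows "(q - 1) * q ^ ((m - 3) div 2) * (q ^ ((m - 1) div 2) - 1)
    \<le> card {x. Tr (x\<^sup>2) = 0 \<and> Tr (b * x) + c \<noteq> 0}"
proof -
  let ?D = "{x. Tr (x\<^sup>2) = 0}" and ?N = "{x. Tr (x\<^sup>2) = 0 \<and> Tr (b * x) = - c}"
  have "{x. Tr (x\<^sup>2) = 0 \<and> Tr (b * x) + c \<noteq> 0} = ?D - ?N"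
    by (auto simp: eq_neg_iff_add_eq_0)
  moreover have "card (?D - ?N) = card ?D - card ?N"
    by (rule card_Diff_subset) auto
  ultimately have card_eq: "card {x. Tr (x\<^sup>2) = 0 \<and> Tr (b * x) + c \<noteq> 0} = q ^ (m - 1) - card ?N"
    by (simp only: card_quadric)
  have N_le: "card ?N \<le> q ^ (m - 2) + (q - 1) * q ^ ((m - 3) div 2)"
    using assms by (intro card_quadric_hyperplane_le) (simp_all add: K.uminus_mem)
  have gap: "B \<le> Z - N" if "B + M = Z" "N \<le> M" for B M Z N :: nat
    using that by linarith
  show ?thesis unfolding card_eq by (rule gap[OF weight_bound_identity N_le])
qed

end

section \<open>The code and its dual\<close>

locale quadric_code = odd_degree_extension +
  fixes d :: "nat \<Rightarrow> 'a" and n :: nat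
  assumes n_def: "n = card {x :: 'a. trace q m (x\<^sup>2) = 0}"
    and d_bij: "bij_betw d {..<n} {x :: 'a. trace q m (x\<^sup>2) = 0}"
begin

lemma n_eq: "n = q ^ (m - 1)"
  using n_def card_quadric by simp

text \<open>Row \<open>r\<close> of \<open>G2\<close> is row \<open>r + 1\<close> of the matrix \<open>G\<^sub>2\<close> of the statement; column \<open>j\<close> belongs to
  the point \<open>d j\<close> of \<open>D\<close>.\<close>

definition G2 :: "nat \<Rightarrow> nat \<Rightarrow> 'a" where
  "G2 r j = (if r = 0 then 1 else if r = 1 then Tr (d j) else if r = 2 then Tr (\<alpha> * d j) + 1
             else Tr (\<alpha> ^ (r - 1) * d j))"

lemma G2'_eq_systematic: "G2' q m \<alpha> d = systematic_matrix (m + 1) G2"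
  by (intro ext) (simp add: G2'_def systematic_matrix_def G2_def Let_def)

lemma G2_mem_K: "G2 r j \<in> K"
  by (simp add: G2_def Tr_mem_K K.add_mem)

lemma G2_Suc: "G2 (Suc i) j = Tr (\<alpha> ^ i * d j) + (if i = 1 then 1 else 0)"
  by (simp add: G2_def)

definition linear_part :: "(nat \<Rightarrow> 'a) \<Rightarrow> 'a" where
  "linear_part a = (\<Sum>i<m. a (Suc i) * \<alpha> ^ i)"

lemma G2_linear_combination:
  assumes "\<And>r. r < m + 1 \<Longrightarrow> a r \<in> K"
  shows "(\<Sum>r<m + 1. a r * G2 r j) = Tr (linear_part a * d j) + (a 0 + a 2)"
proof -
  have "(\<Sum>r<m + 1. a r * G2 r j) = a 0 + (\<Sum>i<m. a (Suc i) * G2 (Suc i) j)"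
    by (simp only: Suc_eq_plus1[symmetric] sum.lessThan_Suc_shift) (simp add: G2_def)
  also have "(\<Sum>i<m. a (Suc i) * G2 (Suc i) j) =
      (\<Sum>i<m. Tr (a (Suc i) * \<alpha> ^ i * d j)) + (\<Sum>i<m. a (Suc i) * (if i = 1 then 1 else 0))"
    using assms by (simp add: G2_Suc distrib_left Tr_scale mult.assoc sum.distrib)
  also have "(\<Sum>i<m. a (Suc i) * (if i = 1 then 1 else 0)) = (\<Sum>i<m. if i = 1 then a (Suc i) else 0)"
    by (rule sum.cong) auto
  also have "\<dots> = a 2"
    using m_ge_3 by (simp add: numeral_2_eq_2)
  also have "(\<Sum>i<m. Tr (a (Suc i) * \<alpha> ^ i * d j)) = Tr (linear_part a * d j)"
    by (simp add: linear_part_def Tr_sum sum_distrib_right)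
  finally show ?thesis by (simp add: algebra_simps)
qed

lemma card_filter_defining_set:
  "card {j. j < n \<and> P (d j)} = card {x. Tr (x\<^sup>2) = 0 \<and> P x}"
proof -
  have "bij_betw d {j. j < n \<and> P (d j)} {x. Tr (x\<^sup>2) = 0 \<and> P x}"
    using d_bij by (auto simp: bij_betw_def inj_on_def image_iff)
  thus ?thesis by (rule bij_betw_same_card)
qed

lemma weight_codeword:
  assumes "a \<in> words q (m + 1)"
  shows "weight (m + 1 + n) (codeword (m + 1) (m + 1 + n) (systematic_matrix (m + 1) G2) a) =
    card {r. r < m + 1 \<and> a r \<noteq> 0} + card {x. Tr (x\<^sup>2) = 0 \<and> Tr (linear_part a * x) + (a 0 + a 2) \<noteq> 0}"
proof -
  have "{j. j < n \<and> (\<Sum>r<m + 1. a r * G2 r j) \<noteq> 0} =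
      {j. j < n \<and> Tr (linear_part a * d j) + (a 0 + a 2) \<noteq> 0}"
    using G2_linear_combination[of a] assms by (auto simp: words_def)
  thus ?thesis
    by (simp only: weight_codeword_systematic
        card_filter_defining_set[of "\<lambda>x. Tr (linear_part a * x) + (a 0 + a 2) \<noteq> 0"])
qed

lemma weight_codeword_ge:
  assumes a: "a \<in> words q (m + 1)" and nonzero: "\<exists>r<m + 1. a r \<noteq> 0"
  shows "(q - 1) * q ^ ((m - 3) div 2) * (q ^ ((m - 1) div 2) - 1) + 1
    \<le> weight (m + 1 + n) (codeword (m + 1) (m + 1 + n) (systematic_matrix (m + 1) G2) a)"
proof -
  have aK: "a r \<in> K" if "r < m + 1" for r using a that by (simp add: words_def)
  have "card {r. r < m + 1 \<and> a r \<noteq> 0} > 0" using nonzero by (auto simp: card_gt_0_iff)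
  moreover have "(q - 1) * q ^ ((m - 3) div 2) * (q ^ ((m - 1) div 2) - 1)
      \<le> card {x. Tr (x\<^sup>2) = 0 \<and> Tr (linear_part a * x) + (a 0 + a 2) \<noteq> 0}"
  proof (cases "linear_part a = 0")
    case True
    have zero: "a (Suc i) = 0" if "i < m" for i
      using powers_linear_independent[of "\<lambda>i. a (Suc i)"] True aK that
      by (simp add: linear_part_def)
    obtain r where r: "r < m + 1" "a r \<noteq> 0" using nonzero by blast
    have "a 0 \<noteq> 0"
    proof (cases r)
      case (Suc i)
      thus ?thesis using r zero[of i] by simp
    qed (use r in simp)
    moreover have "a 2 = 0" using zero[of 1] m_ge_3 by (simp add: numeral_2_eq_2)
    ultimately have "{x. Tr (x\<^sup>2) = 0 \<and> Tr (linear_part a * x) + (a 0 + a 2) \<noteq> 0} = {x. Tr (x\<^sup>2) = 0}"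
      using True by (simp add: Tr_0)
    thus ?thesis using card_quadric weight_bound_identity by simp
  next
    case False
    thus ?thesis using aK m_ge_3 by (intro card_quadric_off_hyperplane_ge) (simp_all add: K.add_mem)
  qed
  ultimately show ?thesis using weight_codeword[OF a] by simp
qed

abbreviation C :: "(nat \<Rightarrow> 'a) set" where
  "C \<equiv> gen_code q (m + 1) (m + 1 + n) (systematic_matrix (m + 1) G2)"

lemma C_eq_image: "C = codeword (m + 1) (m + 1 + n) (systematic_matrix (m + 1) G2) ` words q (m + 1)"
  by (rule gen_code_eq_image)

lemma finite_C: "finite C"
  unfolding C_eq_image using finite_words[OF K.finite] by (rule finite_imageI)

lemma min_dist_C_ge:
  "(q - 1) * q ^ ((m - 3) div 2) * (q ^ ((m - 1) div 2) - 1) + 1 \<le> min_dist (m + 1 + n) C"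
proof -
  let ?c = "codeword (m + 1) (m + 1 + n) (systematic_matrix (m + 1) G2)"
  let ?e = "\<lambda>r. if r = 0 then 1 else 0 :: 'a"
  have "?e \<in> words q (m + 1)" by (simp add: words_def)
  hence "?c ?e \<in> C" unfolding C_eq_image by (rule imageI)
  have "?c ?e 0 = 1"
    using codeword_systematic_info[where k = "m + 1" and n = n and A = G2 and i = 0 and a = ?e]
    by simp
  hence "?c ?e \<noteq> (\<lambda>_. 0)" by (metis one_neq_zero)
  show ?thesis
  proof (rule min_dist_geI[OF finite_C \<open>?c ?e \<in> C\<close> \<open>?c ?e \<noteq> (\<lambda>_. 0)\<close>])
    fix c assume "c \<in> C" "c \<noteq> (\<lambda>_. 0)"
    then obtain a where a: "a \<in> words q (m + 1)" "c = ?c a" "?c a \<noteq> (\<lambda>_. 0)"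
      unfolding C_eq_image by blast
    have "\<exists>r<m + 1. a r \<noteq> 0"
    proof (rule ccontr)
      assume "\<not> (\<exists>r<m + 1. a r \<noteq> 0)"
      hence "?c a = (\<lambda>_. 0)" by (auto simp: codeword_def intro!: sum.neutral)
      thus False using a(3) by contradiction
    qed
    thus "(q - 1) * q ^ ((m - 3) div 2) * (q ^ ((m - 1) div 2) - 1) + 1 \<le> weight (m + 1 + n) c"
      using weight_codeword_ge[OF a(1)] a(2) by simp
  qed
qed

lemma code_parameters:
  "\<exists>d'. code_params q C (m + 1 + n) (m + 1) d' \<and>
     (q - 1) * q ^ ((m - 3) div 2) * (q ^ ((m - 1) div 2) - 1) + 1 \<le> d'"
proof (intro exI conjI)
  have "C \<subseteq> words q (m + 1 + n)"
    using finite_subfield_K by (rule gen_code_subset_words) (simp add: systematic_matrix_def G2_mem_K)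
  moreover have "card C = q ^ (m + 1)"
    by (simp only: card_gen_code_systematic card_K)
  ultimately show "code_params q C (m + 1 + n) (m + 1) (min_dist (m + 1 + n) C)"
    by (simp add: code_params_def)
qed (rule min_dist_C_ge)

abbreviation C_dual :: "(nat \<Rightarrow> 'a) set" where
  "C_dual \<equiv> dual_code q (m + 1 + n) C"

lemma C_dual_eq_image: "C_dual = parity_word (m + 1) n G2 ` words q n"
  using finite_subfield_K by (rule dual_code_systematic) (simp add: G2_mem_K)

lemma finite_C_dual: "finite C_dual"
  unfolding C_dual_eq_image using finite_words[OF K.finite] by (rule finite_imageI)

lemma column_with_zero_point:
  assumes "d j = 0"
  shows "{r. r < m + 1 \<and> G2 r j \<noteq> 0} = {0, 2}"
  using assms m_ge_3 by (auto simp: G2_def Tr_0)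

lemma dual_word_of_weight_3: "\<exists>v\<in>C_dual. v \<noteq> (\<lambda>_. 0) \<and> weight (m + 1 + n) v = 3"
proof -
  let ?p = "parity_word (m + 1) n G2"
  obtain j0 where j0: "j0 < n" "d j0 = 0"
    using d_bij by (metis (mono_tags, lifting) bij_betw_iff_bijections lessThan_iff mem_Collect_eq
        Tr_0 zero_power2)
  let ?w = "\<lambda>j. if j = j0 then 1 else 0 :: 'a"
  have "?w \<in> words q n" using j0 by (simp add: words_def)
  hence mem: "?p ?w \<in> C_dual" unfolding C_dual_eq_image by (rule imageI)
  have "?p ?w (m + 1 + j0) = 1" using j0 by (simp only: parity_word_parity) simp
  hence nonzero: "?p ?w \<noteq> (\<lambda>_. 0)" by (metis one_neq_zero)
  have "(\<Sum>j<n. G2 r j * ?w j) = G2 r j0" for r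
    using j0 by (simp add: if_distrib[of "(*) _"] cong: if_cong)
  hence "weight (m + 1 + n) (?p ?w) = card {r. r < m + 1 \<and> G2 r j0 \<noteq> 0} + card {j. j < n \<and> ?w j \<noteq> 0}"
    by (simp only: weight_parity_word)
  also have "\<dots> = 3"
    using column_with_zero_point[OF j0(2)] j0 by simp
  finally show ?thesis using mem nonzero by blast
qed

lemma weight_C_dual_ge_2:
  assumes "v \<in> C_dual" and "v \<noteq> (\<lambda>_. 0)"
  shows "2 \<le> weight (m + 1 + n) v"
proof -
  obtain w where w: "w \<in> words q n" "v = parity_word (m + 1) n G2 w"
    using assms(1) unfolding C_dual_eq_image by blast
  have "\<exists>j<n. w j \<noteq> 0"
  proof (rule ccontr)
    assume "\<not> (\<exists>j<n. w j \<noteq> 0)"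
    hence "v = (\<lambda>_. 0)" using w(2) by (auto simp: parity_word_def)
    thus False using assms(2) by contradiction
  qed
  moreover have "\<exists>r<m + 1. G2 r j \<noteq> 0" for j by (intro exI[of _ 0]) (simp add: G2_def)
  ultimately show ?thesis
    using weight_parity_word_ge_2 w(2) by blast
qed

lemma dual_code_parameters:
  "\<exists>d'. code_params q C_dual (m + 1 + n) n d' \<and> 2 \<le> d' \<and> d' \<le> 3"
proof (intro exI conjI)
  have "card C_dual = q ^ n"
    using card_dual_code_systematic[OF finite_subfield_K, where k = "m + 1" and n = n and A = G2]
    by (simp add: G2_mem_K card_K)
  thus "code_params q C_dual (m + 1 + n) n (min_dist (m + 1 + n) C_dual)"
    by (auto simp: code_params_def dual_code_def)
  obtain v where v: "v \<in> C_dual" "v \<noteq> (\<lambda>_. 0)" "weight (m + 1 + n) v = 3"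
    using dual_word_of_weight_3 by blast
  show "min_dist (m + 1 + n) C_dual \<le> 3"
    using min_dist_le_weight[OF finite_C_dual v(1,2), of "m + 1 + n"] v(3) by simp
  show "2 \<le> min_dist (m + 1 + n) C_dual"
    by (rule min_dist_geI[OF finite_C_dual v(1,2)]) (rule weight_C_dual_ge_2)
qed

end

theorem theorem3p19:
  fixes p e q m n :: nat and \<alpha> :: "'a::{finite,field}" and d :: "nat \<Rightarrow> 'a"
  assumes "prime p" and "odd p" and "e \<ge> 1" and "q = p ^ e"
    and "m \<ge> 3" and "odd m"
    and "card (UNIV :: 'a set) = q ^ m"
    and "n = card {x::'a. trace q m (x ^ 2) = 0}"
    and "bij_betw d {..<n} {x::'a. trace q m (x ^ 2) = 0}"
    and "\<forall>y::'a. y \<noteq> 0 \<longrightarrow> (\<exists>k::nat. y = \<alpha> ^ k)"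
  shows "n = q ^ (m - 1) \<and>
    (\<exists>d'. code_params q (gen_code q (m + 1) (q ^ (m - 1) + m + 1) (G2' q m \<alpha> d))
              (q ^ (m - 1) + m + 1) (m + 1) d'
         \<and> d' \<ge> (q - 1) * q ^ ((m - 3) div 2) * (q ^ ((m - 1) div 2) - 1) + 1) \<and>
    (\<exists>d'\<^sub>p. code_params q (dual_code q (q ^ (m - 1) + m + 1)
                (gen_code q (m + 1) (q ^ (m - 1) + m + 1) (G2' q m \<alpha> d)))
              (q ^ (m - 1) + m + 1) (q ^ (m - 1)) d'\<^sub>p
         \<and> 2 \<le> d'\<^sub>p \<and> d'\<^sub>p \<le> 3)"
proof -
  interpret quadric_code p e q m \<alpha> d n
    using assms by unfold_locales auto
  have length: "n + m + 1 = m + 1 + n" by simp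
  show ?thesis
    unfolding n_eq[symmetric] length G2'_eq_systematic
    using code_parameters dual_code_parameters by blast
qed

end
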